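(* Let $z\in\mathbb C\setminus\{0\}$, $\nu\in\mathrm{FA}(\partial\mathbb T)$ and $\gamma\in\mathrm{Aut}(\mathbb T)$. Then $\pi_z(\gamma)\nu=\nu$ if and only if $$z^{d(o,\iota(e))}\,\nu(\partial e)=z^{d(o,\iota(\gamma e))}\,\nu(\partial(\gamma e))$$ for every oriented edge $e$ of $\mathbb T$ that points away from $o$ and away from $\gamma^{-1}o$.
   Context: $\mathbb T$ is a locally finite tree without vertices of degree $\le1$, with graph metric $d$ on vertices and a fixed base vertex $o$. For an oriented edge $e$ with initial vertex $\iota(e)$ and terminal vertex $\tau(e)$, $e$ points away from a vertex $x$ if $d(x,\tau(e))=d(x,\iota(e))+1$. $\partial\mathbb T$ is the set of ends of $\mathbb T$ (equivalence classes of geodesic rays, two rays being equivalent if they share infinitely many edges); for every vertex $x$ and end $\omega$ there is a unique geodesic ray from $x$ to $\omega$. The forward set $\partial e\subseteq\partial\mathbb T$ of an oriented edge $e$ consists of the ends $\omega$ whose ray from $\iota(e)$ starts with $e$; forward sets form a basis of compact open sets of a compact totally disconnected topology on $\partial\mathbb T$. $\mathrm{FA}(\partial\mathbb T)$ is the space of finitely additive complex-valued set functions on the clopen subsets of $\partial\mathbb T$; a locally constant $g$ can be integrated: $\int_Ag\,d\nu=\sum_ig_i\nu(A_i)$ for a finite clopen partition $A=\bigsqcup A_i$ with $g\equiv g_i$ on $A_i$. For an end $\omega$ and vertices $x,y$, $h_\omega(x,y):=d(x,w)-d(y,w)$ for any vertex $w$ lying on both rays from $x$ and from $y$ to $\omega$.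 $\mathrm{Aut}(\mathbb T)$ acts on ends, and on $\mathrm{FA}(\partial\mathbb T)$ by $(\gamma\nu)(A)=\nu(\gamma^{-1}A)$. The twisted action is $(\pi_z(\gamma)\nu)(A):=\int_A c_\gamma\,d(\gamma\nu)$, where $c_\gamma(\omega)=z^{h_\omega(\gamma o,\,o)}$ (a locally constant function). *)

theory Defs
  imports "HOL-Analysis.Analysis"
begin

text \<open>Trees: vertices are all elements of the type 'v; E is the adjacency relation.\<close>

definition is_walk :: "('v \<Rightarrow> 'v \<Rightarrow> bool) \<Rightarrow> 'v list \<Rightarrow> bool" where
  "is_walk E xs \<longleftrightarrow> xs \<noteq> [] \<and> (\<forall>i. Suc i < length xs \<longrightarrow> E (xs ! i) (xs ! Suc i))"

definition is_tree :: "('v \<Rightarrow> 'v \<Rightarrow> bool) \<Rightarrow> bool" where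
  "is_tree E \<longleftrightarrow> (\<forall>x y. E x y \<longrightarrow> E y x) \<and> (\<forall>x. \<not> E x x)
     \<and> (\<forall>x y. \<exists>xs. is_walk E xs \<and> hd xs = x \<and> last xs = y)
     \<and> \<not> (\<exists>xs. length xs \<ge> 3 \<and> distinct xs \<and> is_walk E xs \<and> E (last xs) (hd xs))"

definition locally_finite_graph :: "('v \<Rightarrow> 'v \<Rightarrow> bool) \<Rightarrow> bool" where
  "locally_finite_graph E \<longleftrightarrow> (\<forall>x. finite {y. E x y})"

definition no_leaves :: "('v \<Rightarrow> 'v \<Rightarrow> bool) \<Rightarrow> bool" where
  "no_leaves E \<longleftrightarrow> (\<forall>x. card {y. E x y} \<ge> 2)"

definition tdist :: "('v \<Rightarrow> 'v \<Rightarrow> bool) \<Rightarrow> 'v \<Rightarrow> 'v \<Rightarrow> nat" where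
  "tdist E x y = (LEAST n. \<exists>xs. is_walk E xs \<and> hd xs = x \<and> last xs = y \<and> length xs = Suc n)"

definition geod_ray :: "('v \<Rightarrow> 'v \<Rightarrow> bool) \<Rightarrow> (nat \<Rightarrow> 'v) \<Rightarrow> bool" where
  "geod_ray E r \<longleftrightarrow> (\<forall>m n. tdist E (r m) (r n) = (if m \<le> n then n - m else m - n))"

definition ray_edges :: "(nat \<Rightarrow> 'v) \<Rightarrow> 'v set set" where
  "ray_edges r = {{r n, r (Suc n)} | n. True}"

definition ray_equiv :: "('v \<Rightarrow> 'v \<Rightarrow> bool) \<Rightarrow> ((nat \<Rightarrow> 'v) \<times> (nat \<Rightarrow> 'v)) set" where
  "ray_equiv E = {(r, s). geod_ray E r \<and> geod_ray E s \<and> infinite (ray_edges r \<inter> ray_edges s)}"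

definition ends :: "('v \<Rightarrow> 'v \<Rightarrow> bool) \<Rightarrow> (nat \<Rightarrow> 'v) set set" where
  "ends E = {r. geod_ray E r} // ray_equiv E"

definition ray_to :: "('v \<Rightarrow> 'v \<Rightarrow> bool) \<Rightarrow> 'v \<Rightarrow> (nat \<Rightarrow> 'v) set \<Rightarrow> nat \<Rightarrow> 'v" where
  "ray_to E x \<omega> = (THE r. r \<in> \<omega> \<and> r 0 = x)"

definition fwd :: "('v \<Rightarrow> 'v \<Rightarrow> bool) \<Rightarrow> 'v \<times> 'v \<Rightarrow> (nat \<Rightarrow> 'v) set set" where
  "fwd E e = {\<omega> \<in> ends E. ray_to E (fst e) \<omega> 1 = snd e}"

definition oriented_edges :: "('v \<Rightarrow> 'v \<Rightarrow> bool) \<Rightarrow> ('v \<times> 'v) set" where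
  "oriented_edges E = {(u, v). E u v}"

definition points_away :: "('v \<Rightarrow> 'v \<Rightarrow> bool) \<Rightarrow> 'v \<times> 'v \<Rightarrow> 'v \<Rightarrow> bool" where
  "points_away E e x \<longleftrightarrow> tdist E x (snd e) = tdist E x (fst e) + 1"

definition ends_top :: "('v \<Rightarrow> 'v \<Rightarrow> bool) \<Rightarrow> (nat \<Rightarrow> 'v) set topology" where
  "ends_top E = topology_generated_by (fwd E ` oriented_edges E)"

definition clopen_ends :: "('v \<Rightarrow> 'v \<Rightarrow> bool) \<Rightarrow> (nat \<Rightarrow> 'v) set set \<Rightarrow> bool" where
  "clopen_ends E A \<longleftrightarrow> openin (ends_top E) A \<and> closedin (ends_top E) A"

text \<open>Finitely additive complex set functions on the clopen sets
  (values on non-clopen sets are irrelevant and never used).\<close>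
definition FA :: "('v \<Rightarrow> 'v \<Rightarrow> bool) \<Rightarrow> ((nat \<Rightarrow> 'v) set set \<Rightarrow> complex) set" where
  "FA E = {\<nu>. \<forall>A B. clopen_ends E A \<and> clopen_ends E B \<and> A \<inter> B = {} \<longrightarrow> \<nu> (A \<union> B) = \<nu> A + \<nu> B}"

definition fa_integral :: "('v \<Rightarrow> 'v \<Rightarrow> bool) \<Rightarrow> (nat \<Rightarrow> 'v) set set
     \<Rightarrow> ((nat \<Rightarrow> 'v) set \<Rightarrow> complex) \<Rightarrow> ((nat \<Rightarrow> 'v) set set \<Rightarrow> complex) \<Rightarrow> complex" where
  "fa_integral E A g \<nu> = (SOME s. \<exists>P. finite P \<and> \<Union>P = A
      \<and> (\<forall>B\<in>P. \<forall>C\<in>P. B \<noteq> C \<longrightarrow> B \<inter> C = {})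
      \<and> (\<forall>B\<in>P. clopen_ends E B \<and> B \<noteq> {} \<and> (\<forall>\<omega>\<in>B. \<forall>\<omega>'\<in>B. g \<omega> = g \<omega>'))
      \<and> s = (\<Sum>B\<in>P. g (SOME \<omega>. \<omega> \<in> B) * \<nu> B))"

definition horo :: "('v \<Rightarrow> 'v \<Rightarrow> bool) \<Rightarrow> (nat \<Rightarrow> 'v) set \<Rightarrow> 'v \<Rightarrow> 'v \<Rightarrow> int" where
  "horo E \<omega> x y = (THE k. \<forall>w. w \<in> range (ray_to E x \<omega>) \<and> w \<in> range (ray_to E y \<omega>)
        \<longrightarrow> k = int (tdist E x w) - int (tdist E y w))"

definition Aut :: "('v \<Rightarrow> 'v \<Rightarrow> bool) \<Rightarrow> ('v \<Rightarrow> 'v) set" where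
  "Aut E = {\<gamma>. bij \<gamma> \<and> (\<forall>x y. E x y \<longleftrightarrow> E (\<gamma> x) (\<gamma> y))}"

definition act_end :: "('v \<Rightarrow> 'v) \<Rightarrow> (nat \<Rightarrow> 'v) set \<Rightarrow> (nat \<Rightarrow> 'v) set" where
  "act_end \<gamma> \<omega> = (\<lambda>r. \<gamma> \<circ> r) ` \<omega>"

definition act_fa :: "('v \<Rightarrow> 'v \<Rightarrow> bool) \<Rightarrow> ('v \<Rightarrow> 'v) \<Rightarrow> ((nat \<Rightarrow> 'v) set set \<Rightarrow> complex)
     \<Rightarrow> (nat \<Rightarrow> 'v) set set \<Rightarrow> complex" where
  "act_fa E \<gamma> \<nu> A = \<nu> {\<omega> \<in> ends E. act_end \<gamma> \<omega> \<in> A}"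

definition pi_z :: "('v \<Rightarrow> 'v \<Rightarrow> bool) \<Rightarrow> 'v \<Rightarrow> complex \<Rightarrow> ('v \<Rightarrow> 'v)
     \<Rightarrow> ((nat \<Rightarrow> 'v) set set \<Rightarrow> complex) \<Rightarrow> (nat \<Rightarrow> 'v) set set \<Rightarrow> complex" where
  "pi_z E b z \<gamma> \<nu> A = fa_integral E A (\<lambda>\<omega>. z powi horo E \<omega> (\<gamma> b) b) (act_fa E \<gamma> \<nu>)"

end

theory Submission
  imports Defs
begin

text \<open>By compactness of the space of ends (Koenig's lemma, using local finiteness), every clopen
  set of ends is a finite disjoint union of forward sets of edges at one common, arbitrarily large
  distance from b; such edges point away both from b and from \<gamma> b. For an edge e pointing away
  from both, the rays from b and from \<gamma> b to every end in \<partial>e run through e, so the cocycle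
  is constant on \<partial>e, equal to z^(d(\<gamma> b, \<iota> e) - d(b, \<iota> e)). Hence
  \<pi>_z(\<gamma>)\<nu>(\<partial>e) is that constant times \<nu>(\<partial>(inv \<gamma> e)), and after reindexing e by \<gamma> the
  equality \<pi>_z(\<gamma>)\<nu>(\<partial>e) = \<nu>(\<partial>e) is exactly the edge condition. Finite additivity
  transfers the equality between these forward sets and arbitrary clopen sets.\<close>

section \<open>Walks\<close>

fun walk :: "('v \<Rightarrow> 'v \<Rightarrow> bool) \<Rightarrow> 'v list \<Rightarrow> bool" where
  "walk E [] = False"
| "walk E [x] = True"
| "walk E (x # y # xs) \<longleftrightarrow> E x y \<and> walk E (y # xs)"

lemma is_walk_iff_walk: "is_walk E xs \<longleftrightarrow> walk E xs"
proof (induction E xs rule: walk.induct)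
  case (3 E x y xs)
  have "(\<forall>i. Suc i < length (x # y # xs) \<longrightarrow> E ((x # y # xs) ! i) ((x # y # xs) ! Suc i))
      \<longleftrightarrow> E x y \<and> (\<forall>i. Suc i < length (y # xs) \<longrightarrow> E ((y # xs) ! i) ((y # xs) ! Suc i))"
    by (auto simp: less_Suc_eq_0_disj)
  then show ?case using "3.IH" by (simp add: is_walk_def)
qed (simp_all add: is_walk_def)

lemma walk_Cons: "walk E (x # xs) \<longleftrightarrow> xs = [] \<or> E x (hd xs) \<and> walk E xs"
  by (cases xs) auto

lemma walk_append:
  "xs \<noteq> [] \<Longrightarrow> ys \<noteq> [] \<Longrightarrow> walk E (xs @ ys) \<longleftrightarrow> walk E xs \<and> walk E ys \<and> E (last xs) (hd ys)"
  by (induction xs) (auto simp: walk_Cons)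

lemma walk_rev:
  assumes "\<And>x y. E x y \<Longrightarrow> E y x"
  shows "walk E xs \<Longrightarrow> walk E (rev xs)"
proof (induction xs)
  case (Cons x xs)
  then show ?case
    using walk_append[of "rev xs" "[x]" E] by (cases xs) (auto simp: last_rev assms)
qed simp

lemma walk_glue: "walk E (xs @ [w]) \<Longrightarrow> walk E (w # ys) \<Longrightarrow> walk E (xs @ w # ys)"
  by (cases "xs = []") (auto simp: walk_append walk_Cons)

lemma walk_prefix: "walk E (xs @ ys) \<Longrightarrow> xs \<noteq> [] \<Longrightarrow> walk E xs"
  by (cases "ys = []") (simp_all add: walk_append)

lemma walk_suffix: "walk E (xs @ ys) \<Longrightarrow> ys \<noteq> [] \<Longrightarrow> walk E ys"
  by (cases "xs = []") (simp_all add: walk_append)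

lemma walk_nth: "walk E xs \<Longrightarrow> Suc i < length xs \<Longrightarrow> E (xs ! i) (xs ! Suc i)"
  using is_walk_iff_walk[of E xs] unfolding is_walk_def by blast

lemma walk_last_nth: "walk E xs \<Longrightarrow> xs ! (length xs - 1) = last xs"
  by (cases xs rule: rev_cases) auto

section \<open>Paths and distances in trees\<close>

locale tree_graph =
  fixes E :: "'v \<Rightarrow> 'v \<Rightarrow> bool"
  assumes tree: "is_tree E"
begin

lemma adj_sym: "E x y \<Longrightarrow> E y x"
  using tree unfolding is_tree_def by blast

lemma adj_irrefl: "\<not> E x x"
  using tree unfolding is_tree_def by blast

lemma walk_exists: "\<exists>xs. walk E xs \<and> hd xs = x \<and> last xs = y"
  using tree unfolding is_tree_def is_walk_iff_walk by blast

lemma no_cycle: "3 \<le> length xs \<Longrightarrow> distinct xs \<Longrightarrow> walk E xs \<Longrightarrow> E (last xs) (hd xs) \<Longrightarrow> False"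
  using tree unfolding is_tree_def is_walk_iff_walk by blast

lemma unique_path_no_shared_vertex:
  assumes "walk E xs" "walk E ys" "distinct xs" "distinct ys" "hd xs = hd ys" "last xs = last ys"
    and shared: "\<And>w. w \<in> set xs \<Longrightarrow> w \<in> set ys \<Longrightarrow> w = hd xs \<or> w = last xs"
  shows "xs = ys"
proof (rule ccontr)
  assume ne: "xs \<noteq> ys"
  define x where "x = hd xs"
  define y where "y = last xs"
  have nonempty: "xs \<noteq> []" "ys \<noteq> []" using assms(1,2) by auto
  have "x \<noteq> y"
  proof
    assume "x = y"
    then have "xs = [x]" "ys = [x]"
      using assms(3-6) nonempty unfolding x_def y_def
      by (metis distinct.simps(2) hd_Cons_tl last_in_set last_ConsR list.set_sel(2))+
    then show False using ne by simp
  qed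
  obtain ys' where ys': "ys = x # ys'" using nonempty assms(5) unfolding x_def by (cases ys) auto
  then have "ys' \<noteq> []" using \<open>x \<noteq> y\<close> assms(6) unfolding y_def by auto
  then obtain m where ys: "ys = x # m @ [y]"
    using ys' assms(6) unfolding y_def by (metis append_butlast_last_id last.simps)
  have m: "x \<notin> set m" "y \<notin> set m" "distinct m" using assms(4) ys by auto
  have "length xs \<noteq> 1" using \<open>x \<noteq> y\<close> nonempty unfolding x_def y_def by (cases xs) auto
  show False
  proof (cases "m = []")
    case True
    then have "E x y" using assms(2) ys by simp
    have "length xs \<noteq> 2"
    proof
      assume "length xs = 2"
      then have "xs = [x, y]" unfolding x_def y_def by (auto simp: numeral_2_eq_2 length_Suc_conv)
      then show False using ne ys True by simp
    qed
    moreover have "length xs \<noteq> 0" using nonempty by simp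
    ultimately have "3 \<le> length xs" using \<open>length xs \<noteq> 1\<close> by linarith
    then show False using no_cycle[of xs] assms(1,3) adj_sym[OF \<open>E x y\<close>] unfolding x_def y_def by simp
  next
    case False
    define c where "c = xs @ rev m"
    have "set xs \<inter> set m = {}" using shared m ys unfolding x_def y_def by fastforce
    then have "distinct c" unfolding c_def using assms(3) m by simp
    have "walk E (x # m)" "walk E (m @ [y])"
      using assms(2) ys walk_prefix[of E "x # m" "[y]"] walk_suffix[of E "[x]" "m @ [y]"] by simp_all
    then have wm: "walk E m" and "E (last m) y" "E x (hd m)"
      using False walk_Cons[of E x m] walk_append[of m "[y]" E] by simp_all
    then have "walk E c"
      unfolding c_def using assms(1) walk_rev[OF adj_sym wm] walk_append[of xs "rev m" E] False nonempty
        adj_sym unfolding y_def by (simp add: hd_rev)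
    moreover have "length xs \<ge> 2" using \<open>length xs \<noteq> 1\<close> nonempty
      by (cases xs) (auto simp: Suc_le_eq)
    then have "3 \<le> length c" unfolding c_def using False by (cases m) auto
    moreover have "last c = hd m" "hd c = x" unfolding c_def x_def
      using False nonempty by (simp_all add: last_rev)
    ultimately show False using no_cycle[of c] \<open>distinct c\<close> adj_sym[OF \<open>E x (hd m)\<close>] by simp
  qed
qed

text \<open>Split both paths at a shared interior vertex and recurse; if there is none, they close up
  to a cycle.\<close>

lemma unique_path:
  "walk E xs \<Longrightarrow> walk E ys \<Longrightarrow> distinct xs \<Longrightarrow> distinct ys \<Longrightarrow> hd xs = hd ys \<Longrightarrow> last xs = last ys
   \<Longrightarrow> xs = ys"
proof (induction "length xs + length ys" arbitrary: xs ys rule: less_induct)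
  case less
  show ?case
  proof (cases "\<exists>w. w \<in> set xs \<and> w \<in> set ys \<and> w \<noteq> hd xs \<and> w \<noteq> last xs")
    case False
    then show ?thesis using unique_path_no_shared_vertex[OF less.prems] by blast
  next
    case True
    then obtain w where w: "w \<in> set xs" "w \<in> set ys" "w \<noteq> hd xs" "w \<noteq> last xs" by blast
    obtain p s where xs: "xs = p @ w # s" using split_list[OF w(1)] by blast
    obtain p' s' where ys: "ys = p' @ w # s'" using split_list[OF w(2)] by blast
    have ne: "p \<noteq> []" "s \<noteq> []" "p' \<noteq> []" "s' \<noteq> []"
      using w(3,4) less.prems(5,6) unfolding xs ys by auto
    have walks: "walk E (p @ [w])" "walk E (p' @ [w])" "walk E (w # s)" "walk E (w # s')"
      using less.prems(1,2) walk_prefix[of E "p @ [w]"] walk_suffix[of E p "w # s"]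
        walk_prefix[of E "p' @ [w]"] walk_suffix[of E p' "w # s'"] unfolding xs ys by simp_all
    have "p @ [w] = p' @ [w]"
      by (rule less.hyps) (use walks less.prems ne in \<open>simp_all add: xs ys\<close>)
    moreover have "w # s = w # s'"
      by (rule less.hyps) (use walks less.prems ne in \<open>simp_all add: xs ys\<close>)
    ultimately show ?thesis using xs ys by simp
  qed
qed

lemma geodesic_walk_exists: "\<exists>xs. walk E xs \<and> hd xs = x \<and> last xs = y \<and> length xs = Suc (tdist E x y)"
proof -
  obtain xs where xs: "walk E xs" "hd xs = x" "last xs = y" using walk_exists by blast
  then have "length xs = Suc (length xs - 1)" by (cases xs) auto
  then have "\<exists>n xs. is_walk E xs \<and> hd xs = x \<and> last xs = y \<and> length xs = Suc n"
    using xs is_walk_iff_walk by blast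
  from LeastI_ex[OF this] show ?thesis unfolding tdist_def is_walk_iff_walk by blast
qed

lemma tdist_le_length: "walk E xs \<Longrightarrow> tdist E (hd xs) (last xs) \<le> length xs - 1"
  unfolding tdist_def is_walk_iff_walk by (rule Least_le) (cases xs, auto)

lemma tdist_self [simp]: "tdist E x x = 0"
  using tdist_le_length[of "[x]"] by simp

lemma tdist_eq_0_iff: "tdist E x y = 0 \<longleftrightarrow> x = y"
proof
  assume "tdist E x y = 0"
  then obtain xs where "walk E xs" "hd xs = x" "last xs = y" "length xs = 1"
    using geodesic_walk_exists[of x y] by auto
  then show "x = y" by (cases xs) auto
qed simp

lemma tdist_eq_1_iff: "tdist E x y = 1 \<longleftrightarrow> E x y"
proof
  assume "tdist E x y = 1"
  then obtain xs where "walk E xs" "hd xs = x" "last xs = y" "length xs = 2"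
    using geodesic_walk_exists[of x y] by auto
  then show "E x y" by (auto simp: numeral_2_eq_2 length_Suc_conv)
next
  assume "E x y"
  then have "tdist E x y \<le> 1" "x \<noteq> y" using tdist_le_length[of "[x, y]"] adj_irrefl by auto
  then show "tdist E x y = 1" using tdist_eq_0_iff[of x y] by linarith
qed

lemma tdist_sym: "tdist E x y = tdist E y x"
proof -
  have "tdist E x y \<le> tdist E y x" for x y
  proof -
    obtain xs where xs: "walk E xs" "hd xs = y" "last xs = x" "length xs = Suc (tdist E y x)"
      using geodesic_walk_exists by blast
    then have "xs \<noteq> []" by auto
    then show ?thesis using tdist_le_length[OF walk_rev[OF adj_sym xs(1)]] xs
      by (simp add: hd_rev last_rev)
  qed
  then show ?thesis by (meson le_antisym)
qed

lemma tdist_triangle: "tdist E x z \<le> tdist E x y + tdist E y z"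
proof -
  obtain xs where xs: "walk E xs" "hd xs = x" "last xs = y" "length xs = Suc (tdist E x y)"
    using geodesic_walk_exists by blast
  obtain ys where ys: "walk E ys" "hd ys = y" "last ys = z" "length ys = Suc (tdist E y z)"
    using geodesic_walk_exists by blast
  have xs': "xs = butlast xs @ [y]" using xs by (cases xs rule: rev_cases) auto
  have ys': "ys = y # tl ys" using ys by (cases ys) auto
  let ?w = "butlast xs @ y # tl ys"
  have "walk E ?w" using walk_glue[of E "butlast xs" y "tl ys"] xs(1) ys(1) xs' ys' by simp
  moreover have "hd ?w = x" using xs xs' by (cases "butlast xs") simp_all
  moreover have "last ?w = z" using ys ys' by (cases "tl ys") simp_all
  moreover have "length ?w = Suc (tdist E x y + tdist E y z)" using xs ys by simp
  ultimately show ?thesis using tdist_le_length[of ?w] by simp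
qed

lemma tdist_walk_nth: "walk E xs \<Longrightarrow> i \<le> j \<Longrightarrow> j < length xs \<Longrightarrow> tdist E (xs ! i) (xs ! j) \<le> j - i"
proof (induction j)
  case (Suc j)
  show ?case
  proof (cases "i = Suc j")
    case False
    then have "tdist E (xs ! i) (xs ! j) \<le> j - i" "tdist E (xs ! j) (xs ! Suc j) = 1"
      using Suc walk_nth tdist_eq_1_iff by auto
    then show ?thesis using tdist_triangle[of "xs ! i" "xs ! Suc j" "xs ! j"] False Suc.prems by linarith
  qed simp
qed simp

lemma geodesic_walk_distinct:
  assumes "walk E xs" "length xs = Suc (tdist E (hd xs) (last xs))"
  shows "distinct xs"
proof (rule ccontr)
  assume "\<not> distinct xs"
  then obtain p w q s where xs: "xs = p @ [w] @ q @ [w] @ s" using not_distinct_decomp by blast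
  have "walk E (p @ [w])" "walk E (w # s)"
    using walk_prefix[of E "p @ [w]"] walk_suffix[of E "p @ [w] @ q" "w # s"] assms(1)
      unfolding xs by simp_all
  then have "walk E (p @ w # s)" by (rule walk_glue)
  moreover have "hd (p @ w # s) = hd xs" using xs by (cases p) simp_all
  moreover have "last (p @ w # s) = last xs" using xs by (cases s rule: rev_cases) simp_all
  ultimately show False using tdist_le_length[of "p @ w # s"] assms(2) xs by simp
qed

lemma distinct_geodesic_walk_exists:
  "\<exists>xs. walk E xs \<and> hd xs = x \<and> last xs = y \<and> length xs = Suc (tdist E x y) \<and> distinct xs"
  using geodesic_walk_exists[of x y] geodesic_walk_distinct by blast

lemma tdist_geodesic_walk_nth:
  assumes "walk E xs" "hd xs = x" "last xs = y" "length xs = Suc (tdist E x y)" "i < length xs"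
  shows "tdist E x (xs ! i) = i"
proof -
  have "xs ! 0 = x" using assms(1,2) by (cases xs) auto
  moreover have "xs ! (length xs - 1) = y" using assms(1,3) walk_last_nth by blast
  ultimately have "tdist E x (xs ! i) \<le> i" "tdist E (xs ! i) y \<le> length xs - 1 - i"
    using tdist_walk_nth[OF assms(1), of 0 i] tdist_walk_nth[OF assms(1), of i "length xs - 1"] assms(5)
    by simp_all
  then show ?thesis using tdist_triangle[of x y "xs ! i"] assms(4,5) by linarith
qed

lemma geodesic_walk_snoc:
  assumes "walk E p" "hd p = x" "last p = u" "length p = Suc (tdist E x u)" "distinct p" "E u v"
    and far: "tdist E x u \<le> tdist E x v"
  shows "walk E (p @ [v])" "distinct (p @ [v])" "hd (p @ [v]) = x" "last (p @ [v]) = v"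
proof -
  have "v \<notin> set p"
  proof
    assume "v \<in> set p"
    then obtain i where i: "i < length p" "p ! i = v" by (auto simp: in_set_conv_nth)
    then have "i = length p - 1"
      using tdist_geodesic_walk_nth[OF assms(1-4) i(1)] assms(4) far by simp
    then show False using i walk_last_nth[OF assms(1)] assms(3,6) adj_irrefl by simp
  qed
  moreover have "p \<noteq> []" using assms(1) by auto
  ultimately show "walk E (p @ [v])" "distinct (p @ [v])" "hd (p @ [v]) = x" "last (p @ [v]) = v"
    using walk_append[of p "[v]" E] assms by simp_all
qed

text \<open>Equal distances from x to both ends of an edge u v would give two different paths
  from x to v.\<close>

lemma tdist_adj_cases: "E u v \<Longrightarrow> tdist E x v = tdist E x u + 1 \<or> tdist E x u = tdist E x v + 1"
proof -
  assume e: "E u v"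
  have "tdist E u v = 1" "tdist E v u = 1" using e adj_sym tdist_eq_1_iff by blast+
  then have "tdist E x v \<le> tdist E x u + 1" "tdist E x u \<le> tdist E x v + 1"
    using tdist_triangle[of x v u] tdist_triangle[of x u v] by simp_all
  moreover have "tdist E x u \<noteq> tdist E x v"
  proof
    assume eq: "tdist E x u = tdist E x v"
    obtain p where p: "walk E p" "hd p = x" "last p = u" "length p = Suc (tdist E x u)" "distinct p"
      using distinct_geodesic_walk_exists by blast
    obtain q where q: "walk E q" "hd q = x" "last q = v" "length q = Suc (tdist E x v)" "distinct q"
      using distinct_geodesic_walk_exists by blast
    note pv = geodesic_walk_snoc[OF p e]
    have "p @ [v] = q" using unique_path[OF pv(1) q(1) pv(2) q(5)] pv(3,4) q(2,3) eq by simp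
    then show False using p(4) q(4) eq by auto
  qed
  ultimately show ?thesis by linarith
qed

lemma parent_unique:
  assumes "E u1 v" "E u2 v" "tdist E x u1 + 1 = tdist E x v" "tdist E x u2 + 1 = tdist E x v"
  shows "u1 = u2"
proof -
  obtain p where p: "walk E p" "hd p = x" "last p = u1" "length p = Suc (tdist E x u1)" "distinct p"
    using distinct_geodesic_walk_exists by blast
  obtain q where q: "walk E q" "hd q = x" "last q = u2" "length q = Suc (tdist E x u2)" "distinct q"
    using distinct_geodesic_walk_exists by blast
  note pv = geodesic_walk_snoc[OF p assms(1)] and qv = geodesic_walk_snoc[OF q assms(2)]
  have "p @ [v] = q @ [v]"
    using unique_path[OF pv(1) qv(1) pv(2) qv(2)] pv(3,4) qv(3,4) assms(3,4) by simp
  then show ?thesis using p(3) q(3) by simp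
qed

lemma parent_exists: "v \<noteq> x \<Longrightarrow> \<exists>u. E u v \<and> tdist E x u + 1 = tdist E x v"
proof -
  assume "v \<noteq> x"
  obtain p where p: "walk E p" "hd p = x" "last p = v" "length p = Suc (tdist E x v)"
    using geodesic_walk_exists by blast
  define k where "k = tdist E x v"
  have "k \<noteq> 0" using \<open>v \<noteq> x\<close> tdist_eq_0_iff unfolding k_def by metis
  then have "E (p ! (k - 1)) (p ! k)" "tdist E x (p ! (k - 1)) = k - 1" "p ! k = v"
    using walk_nth[OF p(1), of "k - 1"] tdist_geodesic_walk_nth[OF p, of "k - 1"]
      walk_last_nth[OF p(1)] p(3,4)
    unfolding k_def by simp_all
  then show ?thesis using \<open>k \<noteq> 0\<close> unfolding k_def by (metis Suc_eq_plus1 Suc_pred' neq0_conv)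
qed

text \<open>Walk from c towards y: each next vertex is again farther from b than its predecessor,
  because its only neighbour closer to b is the vertex just left.\<close>

lemma tdist_through_edge:
  assumes "E a c" "tdist E y a = tdist E y c + 1" "tdist E b c = tdist E b a + 1"
  shows "tdist E b y = tdist E b c + tdist E c y"
  using assms
proof (induction "tdist E c y" arbitrary: a c)
  case 0
  then show ?case using tdist_eq_0_iff by simp
next
  case (Suc n)
  then have "c \<noteq> y" by auto
  then obtain c' where c': "E c' c" "tdist E y c' + 1 = tdist E y c" using parent_exists by blast
  have "c' \<noteq> a" using c' Suc.prems(2) by auto
  then have "tdist E b c' = tdist E b c + 1"
    using tdist_adj_cases[OF adj_sym[OF c'(1)], of b] parent_unique[OF c'(1) Suc.prems(1), of b]
      Suc.prems(3)
    by auto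
  moreover have "n = tdist E c' y" using Suc.hyps(2) c'(2) tdist_sym[of c y] tdist_sym[of c' y] by simp
  ultimately have "tdist E b y = tdist E b c' + tdist E c' y"
    using Suc.hyps(1) adj_sym[OF c'(1)] c'(2) by simp
  then show ?case using \<open>n = tdist E c' y\<close> Suc.hyps(2) \<open>tdist E b c' = tdist E b c + 1\<close> by simp
qed

lemma points_away_if_closer:
  assumes e: "E a c" and away: "tdist E b c = tdist E b a + 1" and closer: "tdist E b y \<le> tdist E b a"
  shows "tdist E y c = tdist E y a + 1"
proof -
  have "tdist E y a \<noteq> tdist E y c + 1"
    using tdist_through_edge[OF e _ away, of y] away closer by auto
  then show ?thesis using tdist_adj_cases[OF e, of y] by simp
qed

end

section \<open>Geodesic rays and ends\<close>

definition non_backtracking :: "('v \<Rightarrow> 'v \<Rightarrow> bool) \<Rightarrow> (nat \<Rightarrow> 'v) \<Rightarrow> bool" where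
  "non_backtracking E r \<longleftrightarrow> (\<forall>i. E (r i) (r (Suc i))) \<and> (\<forall>i. r i \<noteq> r (Suc (Suc i)))"

definition tails_agree :: "(nat \<Rightarrow> 'v) \<Rightarrow> (nat \<Rightarrow> 'v) \<Rightarrow> bool" where
  "tails_agree r s \<longleftrightarrow> (\<exists>a b. \<forall>j. r (a + j) = s (b + j))"

lemma tails_agree_refl: "tails_agree r r"
  unfolding tails_agree_def by blast

lemma tails_agree_sym: "tails_agree r s \<Longrightarrow> tails_agree s r"
  unfolding tails_agree_def by metis

lemma tails_agree_trans:
  assumes "tails_agree r s" "tails_agree s t"
  shows "tails_agree r t"
proof -
  obtain a b c d where rs: "\<And>j. r (a + j) = s (b + j)" and st: "\<And>j. s (c + j) = t (d + j)"
    using assms unfolding tails_agree_def by blast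
  have "r (a + c + j) = t (d + b + j)" for j
    using rs[of "c + j"] st[of "b + j"] by (simp add: ac_simps)
  then show ?thesis unfolding tails_agree_def by blast
qed

lemma infinite_shared_edges_shift:
  assumes "infinite (ray_edges r \<inter> ray_edges s)"
  shows "infinite (ray_edges (\<lambda>i. r (a + i)) \<inter> ray_edges (\<lambda>i. s (b + i)))"
proof
  have drop: "ray_edges t \<subseteq> ray_edges (\<lambda>i. t (k + i)) \<union> (\<lambda>n. {t n, t (Suc n)}) ` {..<k}"
    for t :: "nat \<Rightarrow> 'a" and k
  proof
    fix e assume "e \<in> ray_edges t"
    then obtain n where n: "e = {t n, t (Suc n)}" unfolding ray_edges_def by blast
    show "e \<in> ray_edges (\<lambda>i. t (k + i)) \<union> (\<lambda>n. {t n, t (Suc n)}) ` {..<k}"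
    proof (cases "n < k")
      case False
      then have "e = {t (k + (n - k)), t (k + Suc (n - k))}" using n by simp
      then show ?thesis unfolding ray_edges_def by blast
    qed (use n in blast)
  qed
  assume "finite (ray_edges (\<lambda>i. r (a + i)) \<inter> ray_edges (\<lambda>i. s (b + i)))"
  then have "finite ((ray_edges (\<lambda>i. r (a + i)) \<inter> ray_edges (\<lambda>i. s (b + i)))
      \<union> (\<lambda>n. {r n, r (Suc n)}) ` {..<a} \<union> (\<lambda>n. {s n, s (Suc n)}) ` {..<b})" by simp
  moreover have "ray_edges r \<inter> ray_edges s \<subseteq> (ray_edges (\<lambda>i. r (a + i)) \<inter> ray_edges (\<lambda>i. s (b + i)))
      \<union> (\<lambda>n. {r n, r (Suc n)}) ` {..<a} \<union> (\<lambda>n. {s n, s (Suc n)}) ` {..<b}"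
    using drop[of r a] drop[of s b] by blast
  ultimately show False using assms finite_subset by blast
qed

definition cone :: "('v \<Rightarrow> 'v \<Rightarrow> bool) \<Rightarrow> 'v \<Rightarrow> nat \<Rightarrow> 'v \<Rightarrow> (nat \<Rightarrow> 'v) set set" where
  "cone E b n v = {\<omega> \<in> ends E. ray_to E b \<omega> n = v}"

context tree_graph
begin

lemma non_backtracking_tdist:
  assumes adj: "\<And>i. i < n \<Longrightarrow> E (f i) (f (Suc i))"
    and no_return: "\<And>i. Suc (Suc i) \<le> n \<Longrightarrow> f i \<noteq> f (Suc (Suc i))"
  shows "j \<le> n \<Longrightarrow> tdist E (f 0) (f j) = j"
proof (induction j rule: nat_less_induct)
  case (1 j)
  show ?case
  proof (cases j)
    case (Suc k)
    show ?thesis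
    proof (cases k)
      case 0
      then show ?thesis using Suc adj[of 0] "1.prems" tdist_eq_1_iff by simp
    next
      case (Suc l)
      have dk: "tdist E (f 0) (f k) = k" and dl: "tdist E (f 0) (f l) = l"
        using "1.IH" "1.prems" \<open>j = Suc k\<close> Suc by simp_all
      have ek: "E (f k) (f j)" and el: "E (f l) (f k)"
        using adj[of k] adj[of l] "1.prems" \<open>j = Suc k\<close> Suc by simp_all
      have "f l \<noteq> f j" using no_return[of l] "1.prems" \<open>j = Suc k\<close> Suc by simp
      then have "tdist E (f 0) (f k) \<noteq> tdist E (f 0) (f j) + 1"
        using parent_unique[OF el adj_sym[OF ek], of "f 0"] dk dl Suc by auto
      then show ?thesis using tdist_adj_cases[OF ek, of "f 0"] dk \<open>j = Suc k\<close> by simp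
    qed
  qed simp
qed

lemma non_backtracking_geod_ray:
  assumes "non_backtracking E r"
  shows "geod_ray E r"
proof -
  have shifted: "tdist E (r m) (r (m + j)) = j" for m j
    using non_backtracking_tdist[of j "\<lambda>i. r (m + i)" j] assms unfolding non_backtracking_def by simp
  show ?thesis unfolding geod_ray_def
  proof (intro allI)
    fix m n
    show "tdist E (r m) (r n) = (if m \<le> n then n - m else m - n)"
      using shifted[of m "n - m"] shifted[of n "m - n"] tdist_sym[of "r m" "r n"]
      by (cases "m \<le> n") simp_all
  qed
qed

lemma geod_ray_tdist: "geod_ray E r \<Longrightarrow> tdist E (r m) (r (m + j)) = j"
  unfolding geod_ray_def by simp

lemma geod_ray_tdist_0: "geod_ray E r \<Longrightarrow> tdist E (r 0) (r j) = j"
  using geod_ray_tdist[of r 0 j] by simp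

lemma geod_ray_adj: "geod_ray E r \<Longrightarrow> E (r i) (r (Suc i))"
  using geod_ray_tdist[of r i 1] tdist_eq_1_iff by simp

lemma geod_ray_inj: "geod_ray E r \<Longrightarrow> r m = r n \<Longrightarrow> m = n"
  unfolding geod_ray_def by (metis tdist_self diff_is_0_eq le_antisym nat_le_linear)

lemma geod_ray_shift: "geod_ray E r \<Longrightarrow> geod_ray E (\<lambda>i. r (k + i))"
  unfolding geod_ray_def by simp

lemma geod_ray_prefix_eq:
  assumes r: "geod_ray E r" and s: "geod_ray E s" and "r 0 = s 0" "r n = s n"
  shows "i \<le> n \<Longrightarrow> r i = s i"
proof (induction "n - i" arbitrary: i)
  case (Suc k)
  then have "r (Suc i) = s (Suc i)" by simp
  moreover have "tdist E (r 0) (r i) + 1 = tdist E (r 0) (r (Suc i))"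
    "tdist E (r 0) (s i) + 1 = tdist E (r 0) (s (Suc i))"
    using geod_ray_tdist_0[OF r] geod_ray_tdist_0[OF s] \<open>r 0 = s 0\<close> by simp_all
  ultimately show ?case
    using parent_unique geod_ray_adj[OF r, of i] geod_ray_adj[OF s, of i] by metis
qed (use \<open>r n = s n\<close> in simp)

lemma geod_ray_same_vertex: "geod_ray E r \<Longrightarrow> geod_ray E s \<Longrightarrow> r 0 = s 0 \<Longrightarrow> r n = s m \<Longrightarrow> n = m"
  by (metis geod_ray_tdist_0)

lemma geod_rays_eq_if_shared_edges:
  assumes r: "geod_ray E r" and s: "geod_ray E s" and "r 0 = s 0"
    and shared: "infinite (ray_edges r \<inter> ray_edges s)"
  shows "r = s"
proof
  fix N
  have "infinite ((ray_edges r \<inter> ray_edges s) - (\<lambda>n. {r n, r (Suc n)}) ` {..<Suc N})"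
    using shared by simp
  then have "(ray_edges r \<inter> ray_edges s) - (\<lambda>n. {r n, r (Suc n)}) ` {..<Suc N} \<noteq> {}"
    by (intro notI) simp
  then obtain e where e: "e \<in> ray_edges r" "e \<in> ray_edges s" "e \<notin> (\<lambda>n. {r n, r (Suc n)}) ` {..<Suc N}"
    by blast
  obtain n m where n: "e = {r n, r (Suc n)}" and m: "e = {s m, s (Suc m)}"
    using e(1,2) unfolding ray_edges_def by blast
  have "N \<le> n"
  proof (rule ccontr)
    assume "\<not> N \<le> n"
    then show False using e(3) n by auto
  qed
  from n m have "{r n, r (Suc n)} = {s m, s (Suc m)}" by simp
  then have "r n = s m \<and> r (Suc n) = s (Suc m) \<or> r n = s (Suc m) \<and> r (Suc n) = s m"
    by (simp only: doubleton_eq_iff)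
  then show "r N = s N"
  proof
    assume "r n = s m \<and> r (Suc n) = s (Suc m)"
    then have "r n = s n" using geod_ray_same_vertex[OF r s \<open>r 0 = s 0\<close>, of n m] by simp
    then show ?thesis using geod_ray_prefix_eq[OF r s \<open>r 0 = s 0\<close>] \<open>N \<le> n\<close> by blast
  next
    assume "r n = s (Suc m) \<and> r (Suc n) = s m"
    then have "n = Suc m" "Suc n = m" using geod_ray_same_vertex[OF r s \<open>r 0 = s 0\<close>] by auto
    then show ?thesis by simp
  qed
qed

lemma infinite_shared_edges_if_tails_agree:
  assumes r: "geod_ray E r" and agree: "\<And>j. r (a + j) = s (b + j)"
  shows "infinite (ray_edges r \<inter> ray_edges s)"
proof -
  define f where "f j = {r (a + j), r (Suc (a + j))}" for j
  have "inj f"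
  proof
    fix i j assume "f i = f j"
    then have "r (a + i) = r (a + j) \<or> r (a + i) = r (Suc (a + j)) \<and> r (Suc (a + i)) = r (a + j)"
      unfolding f_def by (auto simp: doubleton_eq_iff)
    then show "i = j"
      using geod_ray_inj[OF r, of "a + i" "a + j"] geod_ray_inj[OF r, of "a + i" "Suc (a + j)"]
        geod_ray_inj[OF r, of "Suc (a + i)" "a + j"] by auto
  qed
  moreover have "range f \<subseteq> ray_edges r \<inter> ray_edges s"
  proof
    fix e assume "e \<in> range f"
    then obtain j where j: "e = f j" by blast
    then have "e = {s (b + j), s (Suc (b + j))}"
      using agree[of j] agree[of "Suc j"] unfolding f_def by simp
    then show "e \<in> ray_edges r \<inter> ray_edges s" using j unfolding f_def ray_edges_def by blast
  qed
  ultimately show ?thesis using range_inj_infinite finite_subset by blast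
qed

lemma tails_agree_if_infinite_shared_edges:
  assumes r: "geod_ray E r" and s: "geod_ray E s" and shared: "infinite (ray_edges r \<inter> ray_edges s)"
  shows "tails_agree r s"
proof -
  have "ray_edges r \<inter> ray_edges s \<noteq> {}" using shared by (intro notI) simp
  then obtain e where "e \<in> ray_edges r" "e \<in> ray_edges s" by blast
  then obtain n m where "{r n, r (Suc n)} = {s m, s (Suc m)}" unfolding ray_edges_def by blast
  then have "r n = s m \<and> r (Suc n) = s (Suc m) \<or> r n = s (Suc m) \<and> r (Suc n) = s m"
    by (simp only: doubleton_eq_iff)
  then show ?thesis
  proof
    assume "r n = s m \<and> r (Suc n) = s (Suc m)"
    then have "(\<lambda>i. r (n + i)) = (\<lambda>i. s (m + i))"
      using geod_rays_eq_if_shared_edges[OF geod_ray_shift[OF r] geod_ray_shift[OF s]]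
        infinite_shared_edges_shift[OF shared] by simp
    then show ?thesis unfolding tails_agree_def by metis
  next
    assume reversed: "r n = s (Suc m) \<and> r (Suc n) = s m"
    then have "(\<lambda>i. r (Suc n + i)) = (\<lambda>i. s (m + i))"
      using geod_rays_eq_if_shared_edges[OF geod_ray_shift[OF r, of "Suc n"] geod_ray_shift[OF s, of m]]
        infinite_shared_edges_shift[OF shared, of "Suc n" m] reversed by simp
    then have "r (Suc n + 1) = s (m + 1)" by (rule fun_cong)
    then have "r (Suc (Suc n)) = r n" using reversed by simp
    then show ?thesis using geod_ray_inj[OF r] by fastforce
  qed
qed

lemma ray_equiv_iff: "(r, s) \<in> ray_equiv E \<longleftrightarrow> geod_ray E r \<and> geod_ray E s \<and> tails_agree r s"
proof
  assume "geod_ray E r \<and> geod_ray E s \<and> tails_agree r s"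
  then show "(r, s) \<in> ray_equiv E"
    unfolding ray_equiv_def tails_agree_def using infinite_shared_edges_if_tails_agree by blast
qed (use tails_agree_if_infinite_shared_edges in \<open>auto simp: ray_equiv_def\<close>)

lemma ends_iff: "\<omega> \<in> ends E \<longleftrightarrow> (\<exists>r. geod_ray E r \<and> \<omega> = {s. geod_ray E s \<and> tails_agree r s})"
proof -
  have "ray_equiv E `` {r} = {s. geod_ray E s \<and> tails_agree r s}" if "geod_ray E r" for r
    using that by (auto simp: ray_equiv_iff)
  then show ?thesis unfolding ends_def by (metis (no_types, lifting) mem_Collect_eq quotientE quotientI)
qed

lemma end_representative:
  assumes "\<omega> \<in> ends E"
  obtains r where "geod_ray E r" "\<omega> = {s. geod_ray E s \<and> tails_agree r s}"
  using assms ends_iff by blast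

lemma in_end_geod_ray: "\<omega> \<in> ends E \<Longrightarrow> r \<in> \<omega> \<Longrightarrow> geod_ray E r"
  by (erule end_representative) simp

lemma tails_agree_in_end: "\<omega> \<in> ends E \<Longrightarrow> r \<in> \<omega> \<Longrightarrow> s \<in> \<omega> \<Longrightarrow> tails_agree r s"
  by (erule end_representative) (simp, meson tails_agree_sym tails_agree_trans)

lemma in_end_if_tails_agree:
  "\<omega> \<in> ends E \<Longrightarrow> r \<in> \<omega> \<Longrightarrow> geod_ray E s \<Longrightarrow> tails_agree r s \<Longrightarrow> s \<in> \<omega>"
  by (erule end_representative) (simp, meson tails_agree_trans)

lemma in_end_unique:
  assumes "\<omega> \<in> ends E" "r \<in> \<omega>" "s \<in> \<omega>" "r 0 = s 0"
  shows "r = s"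
proof -
  have r: "geod_ray E r" and s: "geod_ray E s" using assms in_end_geod_ray by blast+
  obtain a b where "\<And>j. r (a + j) = s (b + j)"
    using tails_agree_in_end[OF assms(1-3)] unfolding tails_agree_def by blast
  then show "r = s"
    using geod_rays_eq_if_shared_edges[OF r s assms(4)] infinite_shared_edges_if_tails_agree[OF r]
      by blast
qed

lemma geod_ray_prepend_geodesic:
  assumes t: "geod_ray E t" and far: "tdist E y (t 0) \<le> tdist E y (t 1)"
  obtains s where "geod_ray E s" "s 0 = y" "\<And>j. s (tdist E y (t 0) + j) = t j"
proof -
  define D where "D = tdist E y (t 0)"
  obtain p where p: "walk E p" "hd p = y" "last p = t 0" "length p = Suc D"
    using geodesic_walk_exists unfolding D_def by blast
  have pd: "i \<le> D \<Longrightarrow> tdist E y (p ! i) = i" for i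
    using tdist_geodesic_walk_nth[OF p(1-3)] p(4) unfolding D_def by simp
  have p0: "p ! 0 = y" using p(1,2) by (cases p) auto
  have pD: "p ! D = t 0" using walk_last_nth[OF p(1)] p(3,4) by simp
  define s where "s i = (if i \<le> D then p ! i else t (i - D))" for i
  have "E (s i) (s (Suc i))" for i
  proof -
    consider "i < D" | "i = D" | "D < i" by linarith
    then show ?thesis
    proof cases
      case 1 then show ?thesis using walk_nth[OF p(1), of i] p(4) unfolding s_def by simp
    next
      case 2 then show ?thesis using geod_ray_adj[OF t, of 0] pD unfolding s_def by simp
    next
      case 3 then show ?thesis
        using geod_ray_adj[OF t, of "i - D"] unfolding s_def by (simp add: Suc_diff_le)
    qed
  qed
  moreover have "s i \<noteq> s (Suc (Suc i))" for i
  proof -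
    consider "Suc (Suc i) \<le> D" | "Suc i = D" | "D \<le> i" by linarith
    then show ?thesis
    proof cases
      case 1 then show ?thesis using pd[of i] pd[of "Suc (Suc i)"] unfolding s_def by auto
    next
      case 2 then show ?thesis using pd[of i] far unfolding s_def D_def by auto
    next
      case 3
      then have "s i = t (i - D)" "s (Suc (Suc i)) = t (Suc (Suc i) - D)"
        using pD unfolding s_def by auto
      then show ?thesis using geod_ray_inj[OF t, of "i - D" "Suc (Suc i) - D"] 3 by auto
    qed
  qed
  ultimately have "geod_ray E s" using non_backtracking_geod_ray unfolding non_backtracking_def by blast
  moreover have "s 0 = y" using p0 unfolding s_def by simp
  moreover have "s (D + j) = t j" for j using pD unfolding s_def by (cases j) auto
  ultimately show ?thesis using that unfolding D_def by blast
qed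

lemma end_has_ray_from:
  assumes \<omega>: "\<omega> \<in> ends E"
  shows "\<exists>s\<in>\<omega>. s 0 = x"
proof -
  obtain r where r: "geod_ray E r" "\<omega> = {s. geod_ray E s \<and> tails_agree r s}"
    using \<omega> by (rule end_representative)
  obtain k where k: "\<And>k'. tdist E x (r k) \<le> tdist E x (r k')"
    using ex_has_least_nat[of "\<lambda>_. True" 0 "\<lambda>k. tdist E x (r k)"] by blast
  have "tdist E x (r (k + 0)) \<le> tdist E x (r (k + 1))" using k by simp
  then obtain s where s: "geod_ray E s" "s 0 = x" "\<And>j. s (tdist E x (r k) + j) = r (k + j)"
    using geod_ray_prepend_geodesic[OF geod_ray_shift[OF r(1), of k]] by auto
  then have "tails_agree r s"
    unfolding tails_agree_def by (intro exI[of _ k] exI[of _ "tdist E x (r k)"]) simp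
  then show ?thesis using s r by blast
qed

lemma ray_to_ex1: "\<omega> \<in> ends E \<Longrightarrow> \<exists>!r. r \<in> \<omega> \<and> r 0 = x"
  using end_has_ray_from in_end_unique by blast

lemma ray_to_in: "\<omega> \<in> ends E \<Longrightarrow> ray_to E x \<omega> \<in> \<omega>"
  unfolding ray_to_def using theI'[OF ray_to_ex1] by blast

lemma ray_to_0 [simp]: "\<omega> \<in> ends E \<Longrightarrow> ray_to E x \<omega> 0 = x"
  unfolding ray_to_def using theI'[OF ray_to_ex1] by blast

lemma ray_to_unique: "\<omega> \<in> ends E \<Longrightarrow> r \<in> \<omega> \<Longrightarrow> r 0 = x \<Longrightarrow> ray_to E x \<omega> = r"
  unfolding ray_to_def using the1_equality[OF ray_to_ex1] by blast

lemma geod_ray_ray_to: "\<omega> \<in> ends E \<Longrightarrow> geod_ray E (ray_to E x \<omega>)"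
  using ray_to_in in_end_geod_ray by blast

lemma tdist_ray_to [simp]: "\<omega> \<in> ends E \<Longrightarrow> tdist E x (ray_to E x \<omega> n) = n"
  using geod_ray_tdist_0[OF geod_ray_ray_to, of \<omega> x n] by simp

lemma adj_ray_to: "\<omega> \<in> ends E \<Longrightarrow> E (ray_to E x \<omega> n) (ray_to E x \<omega> (Suc n))"
  using geod_ray_adj[OF geod_ray_ray_to] by blast

lemma ray_to_ray_to:
  assumes \<omega>: "\<omega> \<in> ends E"
  shows "ray_to E (ray_to E x \<omega> k) \<omega> = (\<lambda>i. ray_to E x \<omega> (k + i))"
proof (rule ray_to_unique[OF \<omega>])
  have "tails_agree (ray_to E x \<omega>) (\<lambda>i. ray_to E x \<omega> (k + i))"
    unfolding tails_agree_def by (intro exI[of _ k] exI[of _ 0]) simp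
  then show "(\<lambda>i. ray_to E x \<omega> (k + i)) \<in> \<omega>"
    using in_end_if_tails_agree[OF \<omega> ray_to_in[OF \<omega>] geod_ray_shift[OF geod_ray_ray_to[OF \<omega>]]] by blast
qed simp

lemma ray_to_prefix_eq:
  assumes "\<omega> \<in> ends E" "\<omega>' \<in> ends E" "ray_to E x \<omega> n = ray_to E x \<omega>' n" "i \<le> n"
  shows "ray_to E x \<omega> i = ray_to E x \<omega>' i"
  using geod_ray_prefix_eq[OF geod_ray_ray_to[OF assms(1)] geod_ray_ray_to[OF assms(2)]] assms by simp

lemma ray_to_through_edge:
  assumes \<omega>: "\<omega> \<in> ends E" and c: "ray_to E a \<omega> 1 = c" and away: "tdist E y c = tdist E y a + 1"
  shows "ray_to E y \<omega> (tdist E y a + j) = ray_to E a \<omega> j"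
proof -
  have "tdist E y (ray_to E a \<omega> 0) \<le> tdist E y (ray_to E a \<omega> 1)" using c away \<omega> by simp
  then obtain s where s: "geod_ray E s" "s 0 = y" "\<And>j. s (tdist E y a + j) = ray_to E a \<omega> j"
    using geod_ray_prepend_geodesic[OF geod_ray_ray_to[OF \<omega>]] \<omega> by auto
  then have "tails_agree (ray_to E a \<omega>) s"
    unfolding tails_agree_def by (intro exI[of _ 0] exI[of _ "tdist E y a"]) simp
  then have "s \<in> \<omega>" using in_end_if_tails_agree[OF \<omega> ray_to_in[OF \<omega>] s(1)] by blast
  then show ?thesis using ray_to_unique[OF \<omega>] s by metis
qed

lemma fwd_iff: "\<omega> \<in> fwd E (a, c) \<longleftrightarrow> \<omega> \<in> ends E \<and> ray_to E a \<omega> 1 = c"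
  unfolding fwd_def by simp

lemma fwd_subset_ends: "fwd E e \<subseteq> ends E"
  unfolding fwd_def by auto

lemma horo_eqI:
  assumes \<omega>: "\<omega> \<in> ends E" and meet: "\<And>j. ray_to E x \<omega> (p + j) = ray_to E y \<omega> (q + j)"
  shows "horo E \<omega> x y = int p - int q"
proof -
  let ?r = "ray_to E x \<omega>" and ?s = "ray_to E y \<omega>"
  have common: "int (tdist E x w) - int (tdist E y w) = int p - int q"
    if in_both: "w \<in> range ?r" "w \<in> range ?s" for w
  proof -
    obtain m m' where w: "w = ?r m" "w = ?s m'" using in_both by blast
    then have "\<And>i. ?r (m + i) = ?s (m' + i)"
      using ray_to_ray_to[OF \<omega>, of x m] ray_to_ray_to[OF \<omega>, of y m'] by metis
    then have "?s (m' + p) = ?s (q + m)" using meet[of m] by (metis add.commute)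
    then have "m' + p = q + m" using geod_ray_inj[OF geod_ray_ray_to[OF \<omega>]] by blast
    moreover have "tdist E x w = m" using w(1) \<omega> by simp
    moreover have "tdist E y w = m'" using w(2) \<omega> by simp
    ultimately show ?thesis by linarith
  qed
  have "?r p = ?s q" using meet[of 0] by simp
  then have wit: "?r p \<in> range ?r" "?r p \<in> range ?s" by (metis rangeI)+
  show ?thesis unfolding horo_def
  proof (rule the_equality)
    fix k assume "\<forall>w. w \<in> range ?r \<and> w \<in> range ?s \<longrightarrow> k = int (tdist E x w) - int (tdist E y w)"
    then have "k = int (tdist E x (?r p)) - int (tdist E y (?r p))" using wit by blast
    then show "k = int p - int q" using common[OF wit] by simp
  qed (use common in simp)
qed

text \<open>The rays from x and from y to such an end both run through the edge.\<close>

lemma horo_fwd: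
  assumes "\<omega> \<in> fwd E (a, c)" "tdist E x c = tdist E x a + 1" "tdist E y c = tdist E y a + 1"
  shows "horo E \<omega> x y = int (tdist E x a) - int (tdist E y a)"
proof -
  have \<omega>: "\<omega> \<in> ends E" "ray_to E a \<omega> 1 = c" using assms(1) by (simp_all add: fwd_iff)
  show ?thesis
  proof (rule horo_eqI[OF \<omega>(1)])
    fix j
    show "ray_to E x \<omega> (tdist E x a + j) = ray_to E y \<omega> (tdist E y a + j)"
      using ray_to_through_edge[OF \<omega> assms(2)] ray_to_through_edge[OF \<omega> assms(3)] by simp
  qed
qed

lemma fwd_swap:
  assumes \<omega>: "\<omega> \<in> ends E" and e: "E a c"
  shows "\<omega> \<in> fwd E (c, a) \<longleftrightarrow> \<omega> \<notin> fwd E (a, c)"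
proof (cases "ray_to E a \<omega> 1 = c")
  case True
  then have "ray_to E c \<omega> 1 = ray_to E a \<omega> 2"
    using ray_to_ray_to[OF \<omega>, of a 1] by (simp add: numeral_2_eq_2)
  moreover have "ray_to E a \<omega> 2 \<noteq> ray_to E a \<omega> 0"
    using geod_ray_inj[OF geod_ray_ray_to[OF \<omega>], where m = 2 and n = 0] by auto
  ultimately show ?thesis using \<omega> True by (simp add: fwd_iff)
next
  case False
  let ?t1 = "ray_to E a \<omega> 1"
  have ca: "tdist E c a = 1" using e adj_sym tdist_eq_1_iff by blast
  moreover have "tdist E c ?t1 \<noteq> 0" using False tdist_eq_0_iff[of c ?t1] by auto
  ultimately have "tdist E c ?t1 = tdist E c a + 1"
    using tdist_adj_cases[OF adj_ray_to[OF \<omega>, of a 0], of c] \<omega> by auto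
  then have "ray_to E c \<omega> 1 = a"
    using ray_to_through_edge[OF \<omega> refl, where a = a and y = c and j = 0] \<omega> ca by simp
  then show ?thesis using \<omega> False by (simp add: fwd_iff)
qed

lemma in_cone_ray_to: "\<omega> \<in> ends E \<Longrightarrow> \<omega> \<in> cone E b n (ray_to E b \<omega> n)"
  unfolding cone_def by simp

lemma cone_antimono:
  assumes \<omega>: "\<omega> \<in> ends E" and "n \<le> m"
  shows "cone E b m (ray_to E b \<omega> m) \<subseteq> cone E b n (ray_to E b \<omega> n)"
  using ray_to_prefix_eq[OF _ \<omega>] assms(2) unfolding cone_def by auto

lemma cone_eq_fwd:
  assumes \<omega>: "\<omega> \<in> ends E"
  shows "fwd E (ray_to E b \<omega> n, ray_to E b \<omega> (Suc n)) = cone E b (Suc n) (ray_to E b \<omega> (Suc n))"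
proof (intro set_eqI iffI)
  fix \<omega>' assume "\<omega>' \<in> fwd E (ray_to E b \<omega> n, ray_to E b \<omega> (Suc n))"
  then have \<omega>': "\<omega>' \<in> ends E" "ray_to E (ray_to E b \<omega> n) \<omega>' 1 = ray_to E b \<omega> (Suc n)"
    by (simp_all add: fwd_iff)
  then have "ray_to E b \<omega>' (n + 1) = ray_to E b \<omega> (Suc n)"
    using ray_to_through_edge[OF \<omega>', where y = b and j = 1] \<omega> by simp
  then show "\<omega>' \<in> cone E b (Suc n) (ray_to E b \<omega> (Suc n))" using \<omega>' unfolding cone_def by simp
next
  fix \<omega>' assume "\<omega>' \<in> cone E b (Suc n) (ray_to E b \<omega> (Suc n))"
  then have \<omega>': "\<omega>' \<in> ends E" "ray_to E b \<omega>' (Suc n) = ray_to E b \<omega> (Suc n)" unfolding cone_def by auto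
  then have "ray_to E b \<omega>' n = ray_to E b \<omega> n" using ray_to_prefix_eq[OF \<omega>'(1) \<omega>] by simp
  then have "ray_to E (ray_to E b \<omega> n) \<omega>' 1 = ray_to E b \<omega> (Suc n)"
    using ray_to_ray_to[OF \<omega>'(1), of b n] \<omega>'(2) by simp
  then show "\<omega>' \<in> fwd E (ray_to E b \<omega> n, ray_to E b \<omega> (Suc n))" using \<omega>'(1) by (simp add: fwd_iff)
qed

lemma fwd_contains_cone:
  assumes "\<omega> \<in> fwd E (a, c)"
  obtains n where "cone E b n (ray_to E b \<omega> n) \<subseteq> fwd E (a, c)"
proof -
  have \<omega>: "\<omega> \<in> ends E" "ray_to E a \<omega> 1 = c" using assms by (simp_all add: fwd_iff)
  let ?r = "ray_to E b \<omega>" and ?t = "ray_to E a \<omega>"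
  obtain p q where pq: "\<And>j. ?r (p + j) = ?t (q + j)"
    using tails_agree_in_end[OF \<omega>(1) ray_to_in[OF \<omega>(1)] ray_to_in[OF \<omega>(1)]]
      unfolding tails_agree_def by blast
  have "cone E b (Suc p) (?r (Suc p)) = fwd E (?r p, ?r (Suc p))" using cone_eq_fwd[OF \<omega>(1)] by simp
  also have "\<dots> = cone E a (Suc q) (?t (Suc q))" using pq[of 0] pq[of 1] cone_eq_fwd[OF \<omega>(1)] by simp
  also have "\<dots> \<subseteq> cone E a (Suc 0) (?t (Suc 0))" using cone_antimono[OF \<omega>(1)] by simp
  also have "\<dots> = fwd E (a, c)" using cone_eq_fwd[OF \<omega>(1), of a 0] \<omega> by simp
  finally show ?thesis using that by blast
qed

end

section \<open>Automorphisms\<close>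

lemma Aut_adj: "\<gamma> \<in> Aut E \<Longrightarrow> E (\<gamma> x) (\<gamma> y) \<longleftrightarrow> E x y"
  unfolding Aut_def by blast

lemma Aut_inv_apply [simp]: "\<gamma> \<in> Aut E \<Longrightarrow> inv \<gamma> (\<gamma> x) = x"
  unfolding Aut_def by (simp add: bij_is_inj)

lemma Aut_apply_inv [simp]: "\<gamma> \<in> Aut E \<Longrightarrow> \<gamma> (inv \<gamma> x) = x"
  unfolding Aut_def by (simp add: bij_is_surj surj_f_inv_f)

lemma inv_Aut:
  assumes "\<gamma> \<in> Aut E"
  shows "inv \<gamma> \<in> Aut E"
proof -
  have "E x y \<longleftrightarrow> E (inv \<gamma> x) (inv \<gamma> y)" for x y
    using Aut_adj[OF assms, of "inv \<gamma> x" "inv \<gamma> y"] assms by simp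
  then show ?thesis using assms unfolding Aut_def by (simp add: bij_imp_bij_inv)
qed

lemma walk_map_Aut: "\<gamma> \<in> Aut E \<Longrightarrow> walk E xs \<Longrightarrow> walk E (map \<gamma> xs)"
  by (induction xs) (auto simp: Aut_adj walk_Cons hd_map)

lemma tails_agree_comp: "tails_agree r s \<Longrightarrow> tails_agree (\<gamma> \<circ> r) (\<gamma> \<circ> s)"
  unfolding tails_agree_def by (metis comp_apply)

context tree_graph
begin

lemma tdist_Aut [simp]:
  assumes \<gamma>: "\<gamma> \<in> Aut E"
  shows "tdist E (\<gamma> x) (\<gamma> y) = tdist E x y"
proof -
  have le: "tdist E (\<delta> x) (\<delta> y) \<le> tdist E x y" if "\<delta> \<in> Aut E" for \<delta> x y
  proof -
    obtain p where p: "walk E p" "hd p = x" "last p = y" "length p = Suc (tdist E x y)"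
      using geodesic_walk_exists by blast
    then have "p \<noteq> []" by auto
    then show ?thesis
      using tdist_le_length[OF walk_map_Aut[OF that p(1)]] p by (simp add: hd_map last_map)
  qed
  show ?thesis using le[OF \<gamma>, of x y] le[OF inv_Aut[OF \<gamma>], of "\<gamma> x" "\<gamma> y"] \<gamma> by simp
qed

lemma geod_ray_Aut: "\<gamma> \<in> Aut E \<Longrightarrow> geod_ray E r \<Longrightarrow> geod_ray E (\<gamma> \<circ> r)"
  unfolding geod_ray_def by simp

lemma act_end_ends:
  assumes \<gamma>: "\<gamma> \<in> Aut E" and \<omega>: "\<omega> \<in> ends E"
  shows "act_end \<gamma> \<omega> \<in> ends E"
proof -
  obtain r where r: "geod_ray E r" "\<omega> = {s. geod_ray E s \<and> tails_agree r s}"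
    using \<omega> by (rule end_representative)
  have inv_comp: "inv \<gamma> \<circ> (\<gamma> \<circ> s) = s" "\<gamma> \<circ> (inv \<gamma> \<circ> s) = s" for s :: "nat \<Rightarrow> 'v"
    using \<gamma> by (simp_all add: fun_eq_iff)
  have "act_end \<gamma> \<omega> = {s. geod_ray E s \<and> tails_agree (\<gamma> \<circ> r) s}"
  proof (intro set_eqI iffI)
    fix s assume "s \<in> act_end \<gamma> \<omega>"
    then show "s \<in> {s. geod_ray E s \<and> tails_agree (\<gamma> \<circ> r) s}"
      using r geod_ray_Aut[OF \<gamma>] tails_agree_comp unfolding act_end_def by auto
  next
    fix s assume s: "s \<in> {s. geod_ray E s \<and> tails_agree (\<gamma> \<circ> r) s}"
    then have "inv \<gamma> \<circ> s \<in> \<omega>"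
      using r geod_ray_Aut[OF inv_Aut[OF \<gamma>]] tails_agree_comp[of "\<gamma> \<circ> r" s "inv \<gamma>"] inv_comp by auto
    then show "s \<in> act_end \<gamma> \<omega>" unfolding act_end_def using inv_comp(2)[of s] by (metis image_eqI)
  qed
  then show ?thesis using ends_iff geod_ray_Aut[OF \<gamma> r(1)] by blast
qed

lemma ray_to_act_end:
  assumes \<gamma>: "\<gamma> \<in> Aut E" and \<omega>: "\<omega> \<in> ends E"
  shows "ray_to E (\<gamma> x) (act_end \<gamma> \<omega>) = \<gamma> \<circ> ray_to E x \<omega>"
  using ray_to_in[OF \<omega>] \<omega> by (intro ray_to_unique[OF act_end_ends[OF \<gamma> \<omega>]]) (auto simp: act_end_def)

lemma act_end_in_fwd_iff:
  assumes \<gamma>: "\<gamma> \<in> Aut E" and \<omega>: "\<omega> \<in> ends E"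
  shows "act_end \<gamma> \<omega> \<in> fwd E (\<gamma> a, \<gamma> c) \<longleftrightarrow> \<omega> \<in> fwd E (a, c)"
  using act_end_ends[OF \<gamma> \<omega>] ray_to_act_end[OF \<gamma> \<omega>] \<omega> Aut_inv_apply[OF \<gamma>]
  by (auto simp: fwd_iff) (metis Aut_inv_apply[OF \<gamma>])

lemma act_end_preimage_fwd:
  assumes \<gamma>: "\<gamma> \<in> Aut E"
  shows "{\<omega> \<in> ends E. act_end \<gamma> \<omega> \<in> fwd E (a, c)} = fwd E (inv \<gamma> a, inv \<gamma> c)"
  using act_end_in_fwd_iff[OF \<gamma>, of _ "inv \<gamma> a" "inv \<gamma> c"] fwd_subset_ends \<gamma> by auto

end

section \<open>The topology of the space of ends\<close>

lemma clopen_ends_empty: "clopen_ends E {}"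
  unfolding clopen_ends_def by simp

lemma clopen_ends_Un: "clopen_ends E A \<Longrightarrow> clopen_ends E B \<Longrightarrow> clopen_ends E (A \<union> B)"
  unfolding clopen_ends_def by (simp add: openin_Un closedin_Un)

lemma clopen_ends_Union: "finite P \<Longrightarrow> (\<And>B. B \<in> P \<Longrightarrow> clopen_ends E B) \<Longrightarrow> clopen_ends E (\<Union>P)"
  by (induction P rule: finite_induct) (simp_all add: clopen_ends_empty clopen_ends_Un)

definition decides :: "('v \<Rightarrow> 'v \<Rightarrow> bool) \<Rightarrow> 'v \<Rightarrow> (nat \<Rightarrow> 'v) set set \<Rightarrow> (nat \<Rightarrow> 'v) set \<Rightarrow> nat \<Rightarrow> bool" where
  "decides E b B \<omega> n \<longleftrightarrow> cone E b n (ray_to E b \<omega> n) \<subseteq> B \<or> cone E b n (ray_to E b \<omega> n) \<inter> B = {}"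

definition undecided_cone ::
    "('v \<Rightarrow> 'v \<Rightarrow> bool) \<Rightarrow> 'v \<Rightarrow> (nat \<Rightarrow> 'v) set set \<Rightarrow> 'v \<Rightarrow> nat \<Rightarrow> bool" where
  "undecided_cone E b B v k \<longleftrightarrow> (\<forall>M \<ge> k. \<exists>\<omega> \<in> cone E b k v. \<not> decides E b B \<omega> M)"

context tree_graph
begin

lemma topspace_ends_top: "topspace (ends_top E) = ends E"
proof
  show "topspace (ends_top E) \<subseteq> ends E" unfolding ends_top_def using fwd_subset_ends by auto
  show "ends E \<subseteq> topspace (ends_top E)"
  proof
    fix \<omega> assume \<omega>: "\<omega> \<in> ends E"
    obtain r where "geod_ray E r" "\<omega> = {s. geod_ray E s \<and> tails_agree r s}"
      using \<omega> by (rule end_representative)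
    let ?b = "r 0"
    have "(?b, ray_to E ?b \<omega> 1) \<in> oriented_edges E" "\<omega> \<in> fwd E (?b, ray_to E ?b \<omega> 1)"
      using adj_ray_to[OF \<omega>, of ?b 0] \<omega> by (simp_all add: oriented_edges_def fwd_iff)
    then show "\<omega> \<in> topspace (ends_top E)" unfolding ends_top_def by auto
  qed
qed

lemma openin_fwd: "E a c \<Longrightarrow> openin (ends_top E) (fwd E (a, c))"
  unfolding ends_top_def openin_topology_generated_by_iff oriented_edges_def
  by (rule generate_topology_on.Basis) auto

lemma clopen_fwd:
  assumes "E a c"
  shows "clopen_ends E (fwd E (a, c))"
proof -
  have "topspace (ends_top E) - fwd E (a, c) = fwd E (c, a)"
    using fwd_swap[OF _ assms] fwd_subset_ends topspace_ends_top by blast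
  then show ?thesis unfolding clopen_ends_def closedin_def
    using openin_fwd[OF assms] openin_fwd[OF adj_sym[OF assms]] fwd_subset_ends topspace_ends_top by simp
qed

lemma clopen_ends_subset: "clopen_ends E A \<Longrightarrow> A \<subseteq> ends E"
  unfolding clopen_ends_def using openin_subset topspace_ends_top by blast

lemma clopen_ends_Diff: "clopen_ends E A \<Longrightarrow> clopen_ends E (ends E - A)"
  unfolding clopen_ends_def
  using openin_diff[OF openin_topspace, of "ends_top E" A]
    closedin_diff[OF closedin_topspace, of "ends_top E" A]
  by (simp add: topspace_ends_top)

lemma openin_contains_cone:
  assumes "openin (ends_top E) U" "\<omega> \<in> U"
  shows "\<exists>n. cone E b n (ray_to E b \<omega> n) \<subseteq> U"
proof -
  have "generate_topology_on (fwd E ` oriented_edges E) U"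
    using assms(1) unfolding ends_top_def openin_topology_generated_by_iff .
  then show ?thesis using assms(2)
  proof (induction arbitrary: \<omega> rule: generate_topology_on.induct)
    case (Int A B)
    obtain n1 where n1: "cone E b n1 (ray_to E b \<omega> n1) \<subseteq> A" using Int by blast
    obtain n2 where n2: "cone E b n2 (ray_to E b \<omega> n2) \<subseteq> B" using Int by blast
    have "openin (ends_top E) A"
      unfolding ends_top_def openin_topology_generated_by_iff by (rule Int.hyps(1))
    then have "\<omega> \<in> ends E" using Int.prems openin_subset topspace_ends_top by blast
    then have "cone E b (max n1 n2) (ray_to E b \<omega> (max n1 n2)) \<subseteq> A \<inter> B"
      using cone_antimono[of \<omega> n1 "max n1 n2" b] cone_antimono[of \<omega> n2 "max n1 n2" b] n1 n2 by auto
    then show ?case by blast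
  next
    case (UN K)
    then obtain k where "k \<in> K" "\<omega> \<in> k" by blast
    with UN.IH show ?case by blast
  next
    case (Basis s)
    then obtain a c where "s = fwd E (a, c)" unfolding oriented_edges_def by auto
    then show ?case using fwd_contains_cone[of \<omega> a c b] Basis.prems by metis
  qed simp
qed

lemma openin_act_end_preimage:
  assumes \<gamma>: "\<gamma> \<in> Aut E" and "openin (ends_top E) U"
  shows "openin (ends_top E) {\<omega> \<in> ends E. act_end \<gamma> \<omega> \<in> U}"
proof -
  have "generate_topology_on (fwd E ` oriented_edges E) U"
    using assms(2) unfolding ends_top_def openin_topology_generated_by_iff .
  then show ?thesis
  proof (induction rule: generate_topology_on.induct)
    case (Int A B)
    have "{\<omega> \<in> ends E. act_end \<gamma> \<omega> \<in> A \<inter> B}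
        = {\<omega> \<in> ends E. act_end \<gamma> \<omega> \<in> A} \<inter> {\<omega> \<in> ends E. act_end \<gamma> \<omega> \<in> B}" by blast
    then show ?case using openin_Int[OF Int.IH] by simp
  next
    case (UN K)
    have "{\<omega> \<in> ends E. act_end \<gamma> \<omega> \<in> \<Union>K} = (\<Union>k\<in>K. {\<omega> \<in> ends E. act_end \<gamma> \<omega> \<in> k})" by blast
    moreover have "openin (ends_top E) (\<Union>k\<in>K. {\<omega> \<in> ends E. act_end \<gamma> \<omega> \<in> k})"
      using UN.IH by (intro openin_Union) blast
    ultimately show ?case by simp
  next
    case (Basis s)
    then obtain a c where "E a c" "s = fwd E (a, c)" unfolding oriented_edges_def by auto
    then show ?case
      using act_end_preimage_fwd[OF \<gamma>] openin_fwd Aut_adj[OF inv_Aut[OF \<gamma>]] by simp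
  qed simp
qed

lemma clopen_act_end_preimage:
  assumes \<gamma>: "\<gamma> \<in> Aut E" and A: "clopen_ends E A"
  shows "clopen_ends E {\<omega> \<in> ends E. act_end \<gamma> \<omega> \<in> A}"
proof -
  have "{\<omega> \<in> ends E. act_end \<gamma> \<omega> \<in> ends E - A} = ends E - {\<omega> \<in> ends E. act_end \<gamma> \<omega> \<in> A}"
    using act_end_ends[OF \<gamma>] by blast
  moreover have "openin (ends_top E) {\<omega> \<in> ends E. act_end \<gamma> \<omega> \<in> A}"
    "openin (ends_top E) {\<omega> \<in> ends E. act_end \<gamma> \<omega> \<in> ends E - A}"
    using openin_act_end_preimage[OF \<gamma>] A clopen_ends_Diff[OF A] unfolding clopen_ends_def by blast+
  ultimately show ?thesis unfolding clopen_ends_def closedin_def topspace_ends_top by auto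
qed

lemma finite_sphere:
  assumes lf: "locally_finite_graph E"
  shows "finite {v. tdist E b v = n}"
proof (induction n)
  case (Suc n)
  have "{v. tdist E b v = Suc n} \<subseteq> (\<Union>u\<in>{v. tdist E b v = n}. {y. E u y})"
  proof
    fix v assume v: "v \<in> {v. tdist E b v = Suc n}"
    then have "v \<noteq> b" by auto
    then obtain u where "E u v" "tdist E b u + 1 = tdist E b v" using parent_exists by blast
    then show "v \<in> (\<Union>u\<in>{v. tdist E b v = n}. {y. E u y})" using v by auto
  qed
  moreover have "finite (\<Union>u\<in>{v. tdist E b v = n}. {y. E u y})"
    using Suc lf unfolding locally_finite_graph_def by blast
  ultimately show ?case using finite_subset by blast
qed (simp add: tdist_eq_0_iff)

lemma finite_ray_to_image:
  assumes "locally_finite_graph E" "X \<subseteq> ends E"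
  shows "finite ((\<lambda>\<omega>. ray_to E b \<omega> n) ` X)"
proof -
  have "(\<lambda>\<omega>. ray_to E b \<omega> n) ` X \<subseteq> {v. tdist E b v = n}" using assms(2) by auto
  then show ?thesis using finite_sphere[OF assms(1)] finite_subset by blast
qed

lemma decides_mono: "\<omega> \<in> ends E \<Longrightarrow> decides E b B \<omega> M \<Longrightarrow> M \<le> M' \<Longrightarrow> decides E b B \<omega> M'"
  unfolding decides_def using cone_antimono[of \<omega> M M' b] by blast

lemma decides_exists:
  assumes B: "clopen_ends E B" and \<omega>: "\<omega> \<in> ends E"
  shows "\<exists>n. decides E b B \<omega> n"
proof (cases "\<omega> \<in> B")
  case True
  then show ?thesis using openin_contains_cone B unfolding clopen_ends_def decides_def by blast
next
  case False
  have "openin (ends_top E) (ends E - B)" using clopen_ends_Diff[OF B] unfolding clopen_ends_def by blast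
  then obtain n where "cone E b n (ray_to E b \<omega> n) \<subseteq> ends E - B"
    using openin_contains_cone \<omega> False by blast
  then show ?thesis unfolding decides_def by blast
qed

text \<open>Koenig's lemma, one step: by local finiteness one of the finitely many children is
  undecided at infinitely many, hence at all, depths.\<close>

lemma undecided_cone_child:
  assumes lf: "locally_finite_graph E" and undecided: "undecided_cone E b B v k"
  obtains u where "E v u" "tdist E b u = Suc k" "undecided_cone E b B u (Suc k)"
proof -
  define X where "X = cone E b k v"
  define C where "C = (\<lambda>\<omega>. ray_to E b \<omega> (Suc k)) ` X"
  have X: "X \<subseteq> ends E" unfolding X_def cone_def by auto
  have "finite C" unfolding C_def using finite_ray_to_image[OF lf X] .
  define P where "P u M \<longleftrightarrow> (\<exists>\<omega> \<in> cone E b (Suc k) u. \<not> decides E b B \<omega> M)" for u M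
  have cover: "\<exists>u\<in>C. P u M" if "Suc k \<le> M" for M
  proof -
    have "k \<le> M" using that by simp
    then obtain \<omega> where "\<omega> \<in> X" "\<not> decides E b B \<omega> M"
      using undecided unfolding undecided_cone_def X_def by blast
    then show ?thesis using in_cone_ray_to X unfolding C_def P_def by blast
  qed
  have "\<exists>u\<in>C. infinite {M. P u M}"
  proof (rule ccontr)
    assume "\<not> ?thesis"
    then have "finite (\<Union>u\<in>C. {M. P u M})" using \<open>finite C\<close> by blast
    moreover have "{Suc k..} \<subseteq> (\<Union>u\<in>C. {M. P u M})" using cover by auto
    ultimately show False using finite_subset infinite_Ici by blast
  qed
  then obtain u where u: "u \<in> C" "infinite {M. P u M}" by blast
  have "P u M" for M
  proof -
    obtain M' where "P u M'" "M \<le> M'" using u(2) by (meson infinite_nat_iff_unbounded_le mem_Collect_eq)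
    then show ?thesis using decides_mono unfolding P_def cone_def by blast
  qed
  then have "undecided_cone E b B u (Suc k)" unfolding undecided_cone_def P_def by blast
  moreover obtain \<omega> where "\<omega> \<in> ends E" "ray_to E b \<omega> k = v" "u = ray_to E b \<omega> (Suc k)"
    using u(1) unfolding C_def X_def cone_def by blast
  ultimately show ?thesis using that adj_ray_to by fastforce
qed

text \<open>Compactness of the space of ends, in the form needed here: a clopen set is decided by
  all ends at one common depth. Otherwise Koenig's lemma yields a ray from b along undecided
  cones, whose end is undecided at every depth.\<close>

lemma uniform_decision_depth:
  assumes lf: "locally_finite_graph E" and B: "clopen_ends E B"
  shows "\<exists>N. \<forall>\<omega>\<in>ends E. decides E b B \<omega> N"
proof (rule ccontr)
  assume "\<not> ?thesis"
  moreover have "cone E b 0 b = ends E" unfolding cone_def by auto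
  ultimately have "undecided_cone E b B b 0" unfolding undecided_cone_def by auto
  define child where "child v k = (SOME u. E v u \<and> tdist E b u = Suc k \<and> undecided_cone E b B u (Suc k))"
    for v k
  define p where "p = rec_nat b (\<lambda>k v. child v k)"
  have step:
    "E (p k) (p (Suc k)) \<and> tdist E b (p (Suc k)) = Suc k \<and> undecided_cone E b B (p (Suc k)) (Suc k)"
    if undecided: "undecided_cone E b B (p k) k" for k
  proof -
    obtain u where "E (p k) u" "tdist E b u = Suc k" "undecided_cone E b B u (Suc k)"
      using undecided_cone_child[OF lf undecided] .
    then have "\<exists>u. E (p k) u \<and> tdist E b u = Suc k \<and> undecided_cone E b B u (Suc k)" by blast
    moreover have "p (Suc k) = child (p k) k" by (simp add: p_def)
    ultimately show ?thesis unfolding child_def by (metis (mono_tags, lifting) someI_ex)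
  qed
  have inv: "undecided_cone E b B (p k) k \<and> tdist E b (p k) = k" for k
  proof (induction k)
    case 0
    then show ?case using \<open>undecided_cone E b B b 0\<close> by (simp add: p_def)
  qed (use step in blast)
  have "p k \<noteq> p (Suc (Suc k))" for k using inv[of k] inv[of "Suc (Suc k)"] by auto
  then have "geod_ray E p"
    using non_backtracking_geod_ray step inv unfolding non_backtracking_def by blast
  define \<omega> where "\<omega> = {s. geod_ray E s \<and> tails_agree p s}"
  have \<omega>: "\<omega> \<in> ends E" "p \<in> \<omega>"
    unfolding \<omega>_def using ends_iff \<open>geod_ray E p\<close> tails_agree_refl by auto
  moreover have "p 0 = b" by (simp add: p_def)
  ultimately have "ray_to E b \<omega> = p" using ray_to_unique by blast
  moreover obtain n where "decides E b B \<omega> n" using decides_exists[OF B \<omega>(1)] by blast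
  moreover obtain \<omega>' where "\<omega>' \<in> cone E b n (p n)" "\<not> decides E b B \<omega>' n"
    using inv[of n] unfolding undecided_cone_def by blast
  ultimately show False unfolding decides_def cone_def by auto
qed

end

section \<open>Partitions of clopen sets into forward sets\<close>

definition fwd_partition ::
    "('v \<Rightarrow> 'v \<Rightarrow> bool) \<Rightarrow> ('v \<Rightarrow> 'v \<Rightarrow> bool) \<Rightarrow> (nat \<Rightarrow> 'v) set set \<Rightarrow> (nat \<Rightarrow> 'v) set set set \<Rightarrow> bool" where
  "fwd_partition E Q A P \<longleftrightarrow> finite P \<and> \<Union>P = A \<and> (\<forall>B\<in>P. \<forall>C\<in>P. B \<noteq> C \<longrightarrow> B \<inter> C = {})
     \<and> (\<forall>C\<in>P. C \<noteq> {} \<and> (\<exists>a c. E a c \<and> Q a c \<and> C = fwd E (a, c)))"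

lemma fwd_partitionD:
  assumes "fwd_partition E Q A P"
  shows "finite P" "\<Union>P = A" "\<And>B C. B \<in> P \<Longrightarrow> C \<in> P \<Longrightarrow> B \<noteq> C \<Longrightarrow> B \<inter> C = {}"
    "\<And>C. C \<in> P \<Longrightarrow> C \<noteq> {}" "\<And>C. C \<in> P \<Longrightarrow> \<exists>a c. E a c \<and> Q a c \<and> C = fwd E (a, c)"
  using assms unfolding fwd_partition_def by (elim conjE; blast)+

lemma fwd_partition_mono:
  assumes P: "fwd_partition E Q A P" and Q: "\<And>a c. E a c \<Longrightarrow> Q a c \<Longrightarrow> Q' a c"
  shows "fwd_partition E Q' A P"
proof -
  have "\<exists>a c. E a c \<and> Q' a c \<and> C = fwd E (a, c)" if "C \<in> P" for C
    using fwd_partitionD(5)[OF P that] Q by blast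
  then show ?thesis unfolding fwd_partition_def
    using fwd_partitionD(1-4)[OF P] by (intro conjI ballI impI) simp_all
qed

context tree_graph
begin

lemma fwd_partition_level:
  assumes lf: "locally_finite_graph E" and A: "clopen_ends E A"
  obtains N P where "N0 \<le> N" "fwd_partition E (\<lambda>a c. tdist E b a = N \<and> points_away E (a, c) b) A P"
proof -
  have A_ends: "A \<subseteq> ends E" using clopen_ends_subset[OF A] .
  obtain N1 where N1: "\<forall>\<omega>\<in>ends E. decides E b A \<omega> N1" using uniform_decision_depth[OF lf A] by blast
  define N where "N = max N0 N1"
  define piece where "piece \<omega> = cone E b (Suc N) (ray_to E b \<omega> (Suc N))" for \<omega>
  define P where "P = piece ` A"
  have "P = (cone E b (Suc N)) ` ((\<lambda>\<omega>. ray_to E b \<omega> (Suc N)) ` A)"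
    unfolding P_def piece_def by (simp add: image_image)
  then have "finite P" using finite_ray_to_image[OF lf A_ends] by simp
  have piece_in: "\<omega> \<in> piece \<omega>" if "\<omega> \<in> A" for \<omega>
    using in_cone_ray_to A_ends that unfolding piece_def by blast
  have "piece \<omega> \<subseteq> A" if "\<omega> \<in> A" for \<omega>
  proof -
    have "decides E b A \<omega> (Suc N)"
      using decides_mono[of \<omega> b A N1 "Suc N"] N1 A_ends that unfolding N_def by auto
    then show ?thesis using piece_in[OF that] that unfolding decides_def piece_def by blast
  qed
  then have "\<Union>P = A" using piece_in unfolding P_def by blast
  moreover have "B \<inter> C = {}" if BC: "B \<in> P" "C \<in> P" "B \<noteq> C" for B C
  proof -
    obtain \<omega>1 \<omega>2 where B: "B = piece \<omega>1" and C: "C = piece \<omega>2" using BC(1,2) unfolding P_def by blast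
    show ?thesis
    proof (rule ccontr)
      assume "B \<inter> C \<noteq> {}"
      then have "ray_to E b \<omega>1 (Suc N) = ray_to E b \<omega>2 (Suc N)" unfolding B C piece_def cone_def by auto
      then show False using BC(3) unfolding B C piece_def by simp
    qed
  qed
  moreover have "C \<noteq> {} \<and> (\<exists>a c. E a c \<and> (tdist E b a = N \<and> points_away E (a, c) b) \<and> C = fwd E (a, c))"
    if C: "C \<in> P" for C
  proof -
    obtain \<omega> where \<omega>: "\<omega> \<in> A" "C = piece \<omega>" using C unfolding P_def by blast
    then have "\<omega> \<in> ends E" using A_ends by blast
    let ?a = "ray_to E b \<omega> N" and ?c = "ray_to E b \<omega> (Suc N)"
    have "C = fwd E (?a, ?c)" using cone_eq_fwd[OF \<open>\<omega> \<in> ends E\<close>, of b N] \<omega>(2) unfolding piece_def by simp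
    moreover have "E ?a ?c" "tdist E b ?a = N" "points_away E (?a, ?c) b"
      using adj_ray_to[OF \<open>\<omega> \<in> ends E\<close>] \<open>\<omega> \<in> ends E\<close> by (simp_all add: points_away_def)
    moreover have "C \<noteq> {}" using piece_in \<omega> by blast
    ultimately show ?thesis by blast
  qed
  ultimately have "fwd_partition E (\<lambda>a c. tdist E b a = N \<and> points_away E (a, c) b) A P"
    using \<open>finite P\<close> unfolding fwd_partition_def by blast
  then show ?thesis using that[of N] unfolding N_def by simp
qed

lemma fwd_partition_away:
  assumes lf: "locally_finite_graph E" and A: "clopen_ends E A"
  obtains P where "fwd_partition E (\<lambda>a c. points_away E (a, c) b \<and> points_away E (a, c) y) A P"
proof -
  obtain N P where N: "tdist E b y \<le> N"
    and P: "fwd_partition E (\<lambda>a c. tdist E b a = N \<and> points_away E (a, c) b) A P"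
    using fwd_partition_level[OF lf A] by blast
  have "points_away E (a, c) y" if "E a c" "tdist E b a = N" "points_away E (a, c) b" for a c
    using points_away_if_closer[OF that(1), of b y] that(2,3) N unfolding points_away_def by simp
  then have "fwd_partition E (\<lambda>a c. points_away E (a, c) b \<and> points_away E (a, c) y) A P"
    by (intro fwd_partition_mono[OF P]) auto
  then show ?thesis by (rule that)
qed

end

section \<open>Finitely additive set functions\<close>

lemma FA_Un:
  "\<nu> \<in> FA E \<Longrightarrow> clopen_ends E A \<Longrightarrow> clopen_ends E B \<Longrightarrow> A \<inter> B = {} \<Longrightarrow> \<nu> (A \<union> B) = \<nu> A + \<nu> B"
  unfolding FA_def by simp

lemma FA_empty: "\<nu> \<in> FA E \<Longrightarrow> \<nu> {} = 0"
  using FA_Un[OF _ clopen_ends_empty clopen_ends_empty, of \<nu>] by simp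

lemma FA_sum:
  assumes "\<nu> \<in> FA E" "finite P" "\<And>B. B \<in> P \<Longrightarrow> clopen_ends E B"
    and "\<And>B C. B \<in> P \<Longrightarrow> C \<in> P \<Longrightarrow> B \<noteq> C \<Longrightarrow> B \<inter> C = {}"
  shows "\<nu> (\<Union>P) = (\<Sum>B\<in>P. \<nu> B)"
  using assms(2-4)
proof (induction P rule: finite_induct)
  case (insert B P)
  have "B \<inter> C = {}" if "C \<in> P" for C using insert.prems(2)[of B C] insert.hyps(2) that by auto
  then have "B \<inter> \<Union>P = {}" by blast
  then have "\<nu> (B \<union> \<Union>P) = \<nu> B + \<nu> (\<Union>P)"
    using FA_Un[OF assms(1)] clopen_ends_Union[OF insert.hyps(1)] insert.prems(1) by simp
  then show ?case using insert by simp
qed (simp add: FA_empty[OF assms(1)])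

lemma FA_scale: "\<mu> \<in> FA E \<Longrightarrow> (\<lambda>B. c * \<mu> B) \<in> FA E"
  unfolding FA_def by (simp add: distrib_left)

definition const_partition ::
    "('v \<Rightarrow> 'v \<Rightarrow> bool) \<Rightarrow> (nat \<Rightarrow> 'v) set set \<Rightarrow> ((nat \<Rightarrow> 'v) set \<Rightarrow> 'a) \<Rightarrow> (nat \<Rightarrow> 'v) set set set \<Rightarrow> bool" where
  "const_partition E A g P \<longleftrightarrow> finite P \<and> \<Union>P = A
      \<and> (\<forall>B\<in>P. \<forall>C\<in>P. B \<noteq> C \<longrightarrow> B \<inter> C = {})
      \<and> (\<forall>B\<in>P. clopen_ends E B \<and> B \<noteq> {} \<and> (\<forall>\<omega>\<in>B. \<forall>\<omega>'\<in>B. g \<omega> = g \<omega>'))"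

text \<open>Since the integral is defined by a choice among all admissible partitions, its value is
  pinned down by showing that every clopen piece on which g is constant contributes the same
  to the integral as to the target set function.\<close>

lemma fa_integral_eqI:
  assumes P: "const_partition E A g P" and \<nu>: "\<nu> \<in> FA E"
    and pieces: "\<And>B k. clopen_ends E B \<Longrightarrow> B \<subseteq> A \<Longrightarrow> (\<And>\<omega>. \<omega> \<in> B \<Longrightarrow> g \<omega> = k) \<Longrightarrow> k * \<mu> B = \<nu> B"
  shows "fa_integral E A g \<mu> = \<nu> A"
proof -
  have sum_eq: "(\<Sum>B\<in>Q. g (SOME \<omega>. \<omega> \<in> B) * \<mu> B) = \<nu> A" if Q: "const_partition E A g Q" for Q
  proof -
    have "g (SOME \<omega>. \<omega> \<in> B) * \<mu> B = \<nu> B" if B: "B \<in> Q" for B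
    proof -
      have props: "clopen_ends E B" "B \<noteq> {}" "\<forall>\<omega>\<in>B. \<forall>\<omega>'\<in>B. g \<omega> = g \<omega>'" "B \<subseteq> A"
        using Q B unfolding const_partition_def by (elim conjE; blast)+
      have "(SOME \<omega>. \<omega> \<in> B) \<in> B" using props(2) by (simp add: some_in_eq)
      then have "g \<omega> = g (SOME \<omega>. \<omega> \<in> B)" if "\<omega> \<in> B" for \<omega> using props(3) that by blast
      then show ?thesis by (rule pieces[OF props(1,4)])
    qed
    then have "(\<Sum>B\<in>Q. g (SOME \<omega>. \<omega> \<in> B) * \<mu> B) = (\<Sum>B\<in>Q. \<nu> B)" by simp
    also have "\<dots> = \<nu> (\<Union>Q)"
      using Q unfolding const_partition_def by (elim conjE) (intro FA_sum[OF \<nu>, symmetric]; blast)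
    also have "\<Union>Q = A" using Q unfolding const_partition_def by (elim conjE)
    finally show ?thesis .
  qed
  have "fa_integral E A g \<mu>
      = (SOME s. \<exists>Q. const_partition E A g Q \<and> s = (\<Sum>B\<in>Q. g (SOME \<omega>. \<omega> \<in> B) * \<mu> B))"
    unfolding fa_integral_def const_partition_def conj_assoc ..
  also have "\<dots> = \<nu> A"
  proof (rule some_equality)
    show "\<exists>Q. const_partition E A g Q \<and> \<nu> A = (\<Sum>B\<in>Q. g (SOME \<omega>. \<omega> \<in> B) * \<mu> B)"
      using P sum_eq[OF P] by metis
  qed (use sum_eq in blast)
  finally show ?thesis .
qed

lemma fa_integral_const:
  assumes A: "clopen_ends E A" and \<mu>: "\<mu> \<in> FA E" and g: "\<And>\<omega>. \<omega> \<in> A \<Longrightarrow> g \<omega> = k"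
  shows "fa_integral E A g \<mu> = k * \<mu> A"
proof (rule fa_integral_eqI[OF _ FA_scale[OF \<mu>]])
  show "const_partition E A g (if A = {} then {} else {A})"
    by (cases "A = {}") (use A g in \<open>simp_all add: const_partition_def\<close>)
next
  fix B k' assume B: "B \<subseteq> A" "\<And>\<omega>. \<omega> \<in> B \<Longrightarrow> g \<omega> = k'"
  show "k' * \<mu> B = k * \<mu> B"
  proof (cases "B = {}")
    case False
    then obtain \<omega> where "\<omega> \<in> B" by blast
    then show ?thesis using B g by force
  qed (simp add: FA_empty[OF \<mu>])
qed

section \<open>The twisted action\<close>

lemma power_mult_eq_iff:
  fixes z :: "'a :: field"
  assumes "z \<noteq> 0"
  shows "z ^ m * x = z ^ n * y \<longleftrightarrow> y = z powi (int m - int n) * x"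
proof -
  have "z ^ m = z ^ n * z powi (int m - int n)"
    using assms by (simp add: power_int_diff)
  then show ?thesis using assms by (auto simp: mult.assoc)
qed

lemma ball_oriented_edges_Aut:
  assumes \<gamma>: "\<gamma> \<in> Aut E"
  shows "(\<forall>e \<in> oriented_edges E. P e) \<longleftrightarrow> (\<forall>a c. E a c \<longrightarrow> P (inv \<gamma> a, inv \<gamma> c))"
proof
  assume "\<forall>e \<in> oriented_edges E. P e"
  then show "\<forall>a c. E a c \<longrightarrow> P (inv \<gamma> a, inv \<gamma> c)"
    using Aut_adj[OF inv_Aut[OF \<gamma>]] unfolding oriented_edges_def by auto
next
  assume "\<forall>a c. E a c \<longrightarrow> P (inv \<gamma> a, inv \<gamma> c)"
  then have "P (a, c)" if "E a c" for a c using that Aut_adj[OF \<gamma>, of a c] \<gamma> by force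
  then show "\<forall>e \<in> oriented_edges E. P e" unfolding oriented_edges_def by auto
qed

context tree_graph
begin

lemma act_fa_FA:
  assumes \<gamma>: "\<gamma> \<in> Aut E" and \<nu>: "\<nu> \<in> FA E"
  shows "act_fa E \<gamma> \<nu> \<in> FA E"
  unfolding FA_def
proof (intro CollectI allI impI)
  fix A B assume AB: "clopen_ends E A \<and> clopen_ends E B \<and> A \<inter> B = {}"
  have "{\<omega> \<in> ends E. act_end \<gamma> \<omega> \<in> A \<union> B}
      = {\<omega> \<in> ends E. act_end \<gamma> \<omega> \<in> A} \<union> {\<omega> \<in> ends E. act_end \<gamma> \<omega> \<in> B}" by blast
  moreover have "{\<omega> \<in> ends E. act_end \<gamma> \<omega> \<in> A} \<inter> {\<omega> \<in> ends E. act_end \<gamma> \<omega> \<in> B} = {}" using AB by blast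
  ultimately show "act_fa E \<gamma> \<nu> (A \<union> B) = act_fa E \<gamma> \<nu> A + act_fa E \<gamma> \<nu> B"
    unfolding act_fa_def using FA_Un[OF \<nu>] clopen_act_end_preimage[OF \<gamma>] AB by simp
qed

lemma points_away_Aut:
  "\<gamma> \<in> Aut E \<Longrightarrow> points_away E (\<gamma> a, \<gamma> c) (\<gamma> x) \<longleftrightarrow> points_away E (a, c) x"
  unfolding points_away_def by simp

lemma const_partition_if_fwd_partition:
  assumes P: "fwd_partition E Q A P"
    and const: "\<And>a c \<omega> \<omega>'. E a c \<Longrightarrow> Q a c \<Longrightarrow> \<omega> \<in> fwd E (a, c) \<Longrightarrow> \<omega>' \<in> fwd E (a, c) \<Longrightarrow> g \<omega> = g \<omega>'"
  shows "const_partition E A g P"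
proof -
  have "clopen_ends E C \<and> C \<noteq> {} \<and> (\<forall>\<omega>\<in>C. \<forall>\<omega>'\<in>C. g \<omega> = g \<omega>')" if C: "C \<in> P" for C
  proof -
    obtain a c where "E a c" "Q a c" "C = fwd E (a, c)" using fwd_partitionD(5)[OF P C] by blast
    then show ?thesis using clopen_fwd const fwd_partitionD(4)[OF P C] by blast
  qed
  then show ?thesis unfolding const_partition_def using fwd_partitionD(1-3)[OF P] by (intro conjI) blast+
qed

lemma pi_z_fwd:
  assumes \<gamma>: "\<gamma> \<in> Aut E" and \<nu>: "\<nu> \<in> FA E" and e: "E a c"
    and away: "points_away E (a, c) b" "points_away E (a, c) (\<gamma> b)"
  shows "pi_z E b z \<gamma> \<nu> (fwd E (a, c))
    = z powi (int (tdist E (\<gamma> b) a) - int (tdist E b a)) * \<nu> (fwd E (inv \<gamma> a, inv \<gamma> c))"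
proof -
  have "pi_z E b z \<gamma> \<nu> (fwd E (a, c))
      = z powi (int (tdist E (\<gamma> b) a) - int (tdist E b a)) * act_fa E \<gamma> \<nu> (fwd E (a, c))"
    unfolding pi_z_def
    using away horo_fwd
      by (intro fa_integral_const clopen_fwd e act_fa_FA \<gamma> \<nu>) (simp add: points_away_def)
  then show ?thesis unfolding act_fa_def using act_end_preimage_fwd[OF \<gamma>] by simp
qed

lemma scaled_act_fa_eq_if_fixes_fwd:
  assumes lf: "locally_finite_graph E" and \<gamma>: "\<gamma> \<in> Aut E" and \<nu>: "\<nu> \<in> FA E"
    and on_fwd: "\<And>a c. E a c \<Longrightarrow> points_away E (a, c) b \<Longrightarrow> points_away E (a, c) (\<gamma> b)
       \<Longrightarrow> pi_z E b z \<gamma> \<nu> (fwd E (a, c)) = \<nu> (fwd E (a, c))"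
    and B: "clopen_ends E B" and const: "\<And>\<omega>. \<omega> \<in> B \<Longrightarrow> z powi horo E \<omega> (\<gamma> b) b = k"
  shows "k * act_fa E \<gamma> \<nu> B = \<nu> B"
proof -
  let ?\<mu> = "act_fa E \<gamma> \<nu>"
  have \<mu>: "?\<mu> \<in> FA E" using act_fa_FA[OF \<gamma> \<nu>] .
  obtain Q where Q: "fwd_partition E (\<lambda>a c. points_away E (a, c) b \<and> points_away E (a, c) (\<gamma> b)) B Q"
    using fwd_partition_away[OF lf B] .
  have "k * ?\<mu> C = \<nu> C" if C: "C \<in> Q" for C
  proof -
    obtain a c where ac: "E a c" "points_away E (a, c) b" "points_away E (a, c) (\<gamma> b)" "C = fwd E (a, c)"
      using fwd_partitionD(5)[OF Q C] by blast
    have "C \<subseteq> B" using fwd_partitionD(2)[OF Q] C by blast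
    then have "fa_integral E C (\<lambda>\<omega>. z powi horo E \<omega> (\<gamma> b) b) ?\<mu> = k * ?\<mu> C"
      unfolding ac(4) using const by (intro fa_integral_const[OF clopen_fwd[OF ac(1)] \<mu>]) blast
    then show ?thesis using on_fwd[OF ac(1-3)] ac(4) unfolding pi_z_def by simp
  qed
  moreover have "clopen_ends E C" if "C \<in> Q" for C
    using fwd_partitionD(5)[OF Q that] clopen_fwd by blast
  ultimately show ?thesis
    using FA_sum[OF \<mu> fwd_partitionD(1)[OF Q] _ fwd_partitionD(3)[OF Q]]
      FA_sum[OF \<nu> fwd_partitionD(1)[OF Q] _ fwd_partitionD(3)[OF Q]] fwd_partitionD(2)[OF Q]
    by (simp add: sum_distrib_left)
qed

lemma pi_z_invariant_iff_fwd:
  assumes lf: "locally_finite_graph E" and \<gamma>: "\<gamma> \<in> Aut E" and \<nu>: "\<nu> \<in> FA E"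
  shows "(\<forall>A. clopen_ends E A \<longrightarrow> pi_z E b z \<gamma> \<nu> A = \<nu> A) \<longleftrightarrow>
    (\<forall>a c. E a c \<and> points_away E (a, c) b \<and> points_away E (a, c) (\<gamma> b)
       \<longrightarrow> pi_z E b z \<gamma> \<nu> (fwd E (a, c)) = \<nu> (fwd E (a, c)))"
    (is "?invariant \<longleftrightarrow> ?on_fwd")
proof
  assume ?invariant
  then show ?on_fwd using clopen_fwd by blast
next
  assume on_fwd: ?on_fwd
  let ?g = "\<lambda>\<omega>. z powi horo E \<omega> (\<gamma> b) b"
  show ?invariant
  proof (intro allI impI)
    fix A assume A: "clopen_ends E A"
    obtain P where "fwd_partition E (\<lambda>a c. points_away E (a, c) b \<and> points_away E (a, c) (\<gamma> b)) A P"
      using fwd_partition_away[OF lf A] .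
    then have "const_partition E A ?g P"
      by (rule const_partition_if_fwd_partition) (use horo_fwd in \<open>simp add: points_away_def\<close>)
    then show "pi_z E b z \<gamma> \<nu> A = \<nu> A" unfolding pi_z_def
    proof (rule fa_integral_eqI[OF _ \<nu>])
      fix B k assume "clopen_ends E B" "\<And>\<omega>. \<omega> \<in> B \<Longrightarrow> ?g \<omega> = k"
      then show "k * act_fa E \<gamma> \<nu> B = \<nu> B"
        using on_fwd by (intro scaled_act_fa_eq_if_fixes_fwd[OF lf \<gamma> \<nu>]) blast+
    qed
  qed
qed

lemma edge_eq_iff_pi_z_fwd:
  assumes \<gamma>: "\<gamma> \<in> Aut E" and \<nu>: "\<nu> \<in> FA E" and z: "z \<noteq> 0" and e: "E a c"
    and away: "points_away E (a, c) b" "points_away E (a, c) (\<gamma> b)"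
  shows "z ^ tdist E b (inv \<gamma> a) * \<nu> (fwd E (inv \<gamma> a, inv \<gamma> c)) = z ^ tdist E b a * \<nu> (fwd E (a, c))
    \<longleftrightarrow> pi_z E b z \<gamma> \<nu> (fwd E (a, c)) = \<nu> (fwd E (a, c))"
proof -
  have "tdist E b (inv \<gamma> a) = tdist E (\<gamma> b) a" using tdist_Aut[OF \<gamma>, of b "inv \<gamma> a"] \<gamma> by simp
  then show ?thesis using pi_z_fwd[OF \<gamma> \<nu> e away] power_mult_eq_iff[OF z] by auto
qed

end

theorem mainTheorem18:
  fixes E :: "'v \<Rightarrow> 'v \<Rightarrow> bool" and b :: 'v and z :: complex
    and \<nu> :: "(nat \<Rightarrow> 'v) set set \<Rightarrow> complex" and \<gamma> :: "'v \<Rightarrow> 'v"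
  assumes "is_tree E" and "locally_finite_graph E" and "no_leaves E"
    and "z \<noteq> 0" and "\<nu> \<in> FA E" and "\<gamma> \<in> Aut E"
  shows "(\<forall>A. clopen_ends E A \<longrightarrow> pi_z E b z \<gamma> \<nu> A = \<nu> A) \<longleftrightarrow>
    (\<forall>e \<in> oriented_edges E. points_away E e b \<and> points_away E e (inv \<gamma> b) \<longrightarrow>
       z ^ tdist E b (fst e) * \<nu> (fwd E e)
         = z ^ tdist E b (\<gamma> (fst e)) * \<nu> (fwd E (\<gamma> (fst e), \<gamma> (snd e))))"
proof -
  interpret tree_graph E by (rule tree_graph.intro) (rule assms(1))
  note lf = assms(2) and z = assms(4) and \<nu> = assms(5) and \<gamma> = assms(6)
  let ?away = "\<lambda>a c. points_away E (a, c) b \<and> points_away E (a, c) (\<gamma> b)"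
  have away_inv: "points_away E (inv \<gamma> a, inv \<gamma> c) b \<longleftrightarrow> points_away E (a, c) (\<gamma> b)"
    "points_away E (inv \<gamma> a, inv \<gamma> c) (inv \<gamma> b) \<longleftrightarrow> points_away E (a, c) b" for a c
    using points_away_Aut[OF \<gamma>, of "inv \<gamma> a" "inv \<gamma> c" b] points_away_Aut[OF inv_Aut[OF \<gamma>], of a c b] \<gamma>
    by simp_all
  have "(\<forall>e \<in> oriented_edges E. points_away E e b \<and> points_away E e (inv \<gamma> b) \<longrightarrow>
       z ^ tdist E b (fst e) * \<nu> (fwd E e)
         = z ^ tdist E b (\<gamma> (fst e)) * \<nu> (fwd E (\<gamma> (fst e), \<gamma> (snd e))))
    \<longleftrightarrow> (\<forall>a c. E a c \<and> ?away a c \<longrightarrow>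
       z ^ tdist E b (inv \<gamma> a) * \<nu> (fwd E (inv \<gamma> a, inv \<gamma> c)) = z ^ tdist E b a * \<nu> (fwd E (a, c)))"
    using \<gamma> by (subst ball_oriented_edges_Aut[OF \<gamma>]) (auto simp: away_inv)
  also have "\<dots> \<longleftrightarrow> (\<forall>a c. E a c \<and> ?away a c \<longrightarrow> pi_z E b z \<gamma> \<nu> (fwd E (a, c)) = \<nu> (fwd E (a, c)))"
    using edge_eq_iff_pi_z_fwd[OF \<gamma> \<nu> z] by blast
  also have "\<dots> \<longleftrightarrow> (\<forall>A. clopen_ends E A \<longrightarrow> pi_z E b z \<gamma> \<nu> A = \<nu> A)"
    using pi_z_invariant_iff_fwd[OF lf \<gamma> \<nu>] by blast
  finally show ?thesis by (rule sym)
qed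

end
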